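(* Let $d\ge2$, $\sigma>0$, let $\mu_0^\star,\mu_1^\star\in\mathbb{S}^{d-1}$ be orthonormal, and for each $L\ge1$ let $(X_\ell,Z_\ell)_{1\le\ell\le L}$ be i.i.d. with $Z_\ell\sim\mathrm{Bernoulli}(1/2)$ and $X_\ell\mid Z_\ell\sim\mathcal{N}(\mu_{Z_\ell}^\star,\sigma^2I_d)$. If $\lambda=\frac{1+4\sigma^2+4\sigma^4}{1+6\sigma^2+12\sigma^4+8\sigma^6}$, then $$\lim_{L\to\infty}\mathcal{L}(T^{\mathrm{lin},\mu_0^\star,\mu_1^\star})=\sigma^2(d-2).$$ Moreover, for any fixed $\lambda>0$ (independent of $L$) and $c\in\{0,1\}$, $$\lim_{L\to\infty}\mathrm{Var}[T^{\mathrm{lin},\mu_0^\star,\mu_1^\star}(\mathbb{X})_1\mid Z_1=c]=2\lambda^2\sigma^2(1+2\sigma^2)^2.$$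
   Context: $\mathbb{X}\in\mathbb{R}^{L\times d}$ has rows $X_1,\dots,X_L$; $T^{\mathrm{lin},\mu_0,\mu_1}(\mathbb{X})_\ell=\frac{2}{L}\sum_{k=1}^L\lambda\,X_\ell^\top(\mu_0\mu_0^\top+\mu_1\mu_1^\top)X_k\,X_k$. The loss is $\mathcal{L}(T)=\frac1L\sum_{\ell=1}^L\mathbb{E}\|X_\ell-T(\mathbb{X})_\ell\|_2^2$. For a random vector $Y$, $\mathrm{Var}[Y\mid Z_1=c]=\mathbb{E}[\|Y-\mathbb{E}[Y\mid Z_1=c]\|_2^2\mid Z_1=c]$. *)

theory Defs
  imports "HOL-Probability.Probability"
begin

definition gauss_density :: "real^'n \<Rightarrow> real \<Rightarrow> real^'n \<Rightarrow> real" where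
  "gauss_density \<mu> \<sigma> x = (\<Prod>i\<in>UNIV. normal_density (\<mu> $ i) \<sigma> (x $ i))"

text \<open>Law of one pair (Z, X): Z ~ Bernoulli(1/2) (True means Z = 1),
  X given Z ~ N(mu_Z, sigma^2 I_d).\<close>
definition sample_M :: "real^'n \<Rightarrow> real^'n \<Rightarrow> real \<Rightarrow> (bool \<times> (real^'n)) measure" where
  "sample_M \<mu>0 \<mu>1 \<sigma> = density (count_space UNIV \<Otimes>\<^sub>M lborel)
     (\<lambda>(z, x). ennreal (1/2 * gauss_density (if z then \<mu>1 else \<mu>0) \<sigma> x))"

text \<open>L i.i.d. pairs, indexed 0..L-1 (index 0 plays the role of l = 1).\<close>
definition seq_M :: "nat \<Rightarrow> real^'n \<Rightarrow> real^'n \<Rightarrow> real \<Rightarrow> (nat \<Rightarrow> bool \<times> (real^'n)) measure" where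
  "seq_M L \<mu>0 \<mu>1 \<sigma> = PiM {..<L} (\<lambda>_. sample_M \<mu>0 \<mu>1 \<sigma>)"

definition T_lin :: "real \<Rightarrow> real^'n \<Rightarrow> real^'n \<Rightarrow> nat \<Rightarrow> (nat \<Rightarrow> real^'n) \<Rightarrow> nat \<Rightarrow> real^'n" where
  "T_lin lam \<mu>0 \<mu>1 L X l = (2 / real L) *\<^sub>R
     (\<Sum>k<L. (lam * ((X l \<bullet> \<mu>0) * (\<mu>0 \<bullet> X k) + (X l \<bullet> \<mu>1) * (\<mu>1 \<bullet> X k))) *\<^sub>R X k)"

definition lin_loss :: "real \<Rightarrow> real^'n \<Rightarrow> real^'n \<Rightarrow> real \<Rightarrow> nat \<Rightarrow> real" where
  "lin_loss lam \<mu>0 \<mu>1 \<sigma> L = (1 / real L) * (\<Sum>l<L.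
     (\<integral>\<omega>. (norm (snd (\<omega> l) - T_lin lam \<mu>0 \<mu>1 L (\<lambda>k. snd (\<omega> k)) l))\<^sup>2 \<partial>seq_M L \<mu>0 \<mu>1 \<sigma>))"

definition cond_exp_event :: "'a measure \<Rightarrow> 'a set \<Rightarrow> ('a \<Rightarrow> 'b::{banach, second_countable_topology}) \<Rightarrow> 'b" where
  "cond_exp_event M A Y = (1 / measure M A) *\<^sub>R (\<integral>\<omega>. indicator A \<omega> *\<^sub>R Y \<omega> \<partial>M)"

definition cond_var_event :: "'a measure \<Rightarrow> 'a set \<Rightarrow> ('a \<Rightarrow> 'b::{banach, second_countable_topology}) \<Rightarrow> real" where
  "cond_var_event M A Y = cond_exp_event M A (\<lambda>\<omega>. (norm (Y \<omega> - cond_exp_event M A Y))\<^sup>2)"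

text \<open>Var[T(X)_1 | Z_1 = c] for sequence length L (c = True means c = 1).\<close>
definition lin_cond_var :: "real \<Rightarrow> real^'n \<Rightarrow> real^'n \<Rightarrow> real \<Rightarrow> bool \<Rightarrow> nat \<Rightarrow> real" where
  "lin_cond_var lam \<mu>0 \<mu>1 \<sigma> c L =
     cond_var_event (seq_M L \<mu>0 \<mu>1 \<sigma>) {\<omega>\<in>space (seq_M L \<mu>0 \<mu>1 \<sigma>). fst (\<omega> 0) = c}
       (\<lambda>\<omega>. T_lin lam \<mu>0 \<mu>1 L (\<lambda>k. snd (\<omega> k)) 0)"

end

theory Submission
  imports Defs
begin

text \<open>
  Write \<open>K = 1/2 + \<sigma>\<^sup>2\<close>. A single sample \<open>X\<close> has second moments
  \<open>E[(a\<bullet>X)(b\<bullet>X)] = ((a\<bullet>\<mu>\<^sub>0)(b\<bullet>\<mu>\<^sub>0) + (a\<bullet>\<mu>\<^sub>1)(b\<bullet>\<mu>\<^sub>1))/2 + \<sigma>\<^sup>2 (a\<bullet>b)\<close>,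
  so the orthonormal means are eigenvectors of the second-moment matrix with eigenvalue \<open>K\<close>.
  Both \<open>X\<^sub>l - T(X)\<^sub>l\<close> and \<open>T(X)\<^sub>1\<close> are averages over \<open>k\<close> of terms depending on \<open>X\<^sub>l\<close>
  and \<open>X\<^sub>k\<close> only, so their squared norms are averages over pairs \<open>(k, m)\<close> of polynomials in
  \<open>X\<^sub>l, X\<^sub>k, X\<^sub>m\<close>. For pairwise distinct indices, independence factorises the expectation into
  Gaussian moments with closed forms in \<open>K\<close>; the \<open>O(L)\<close> remaining pairs have uniformly bounded
  expectations and vanish in the average. Hence the loss tends to
  \<open>1 + d\<sigma>\<^sup>2 - 8\<lambda>K\<^sup>2 + 8\<lambda>\<^sup>2K\<^sup>3\<close>, which is \<open>\<sigma>\<^sup>2(d - 2)\<close> at \<open>\<lambda> = 1/(2K)\<close>, while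
  \<open>E[T(X)\<^sub>1 | Z\<^sub>1 = c] \<rightarrow> 2\<lambda>K\<mu>\<^sub>c\<close> and \<open>E[\<parallel>T(X)\<^sub>1\<parallel>\<^sup>2 | Z\<^sub>1 = c] \<rightarrow> 8\<lambda>\<^sup>2K\<^sup>3\<close>,
  whose difference \<open>8\<lambda>\<^sup>2K\<^sup>3 - 4\<lambda>\<^sup>2K\<^sup>2\<close> is the stated variance.
\<close>

section \<open>Gaussian moments\<close>

definition poly_weight :: "'a::real_normed_vector \<Rightarrow> real" where
  "poly_weight x = (1 + (norm x)\<^sup>2) ^ 3"

lemma poly_weight_nonneg: "0 \<le> poly_weight x"
  by (simp add: poly_weight_def)

lemma prod_le_poly_weight:
  "(1 + (norm x)\<^sup>2) * (1 + (norm y)\<^sup>2) * (1 + (norm z)\<^sup>2) \<le> poly_weight x + poly_weight y + poly_weight z"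
proof -
  have "a * b * c \<le> a ^ 3 + b ^ 3 + c ^ 3" if "0 \<le> a" "0 \<le> b" "0 \<le> c" for a b c :: real
  proof -
    have "a * b * c \<le> max a (max b c) ^ 3"
      using that by (simp add: power3_eq_cube mult_mono)
    also have "\<dots> \<le> a ^ 3 + b ^ 3 + c ^ 3"
      using that by (simp add: max_def)
    finally show ?thesis .
  qed
  then show ?thesis
    unfolding poly_weight_def by simp
qed

lemma one_add_sum_le_prod_one_add:
  fixes t :: "'b \<Rightarrow> real"
  assumes "finite S" "\<And>b. b \<in> S \<Longrightarrow> 0 \<le> t b"
  shows "1 + (\<Sum>b\<in>S. t b) \<le> (\<Prod>b\<in>S. 1 + t b)"
  using assms
proof (induction S rule: finite_induct)
  case (insert a S)
  then have "1 + (\<Sum>b\<in>insert a S. t b) \<le> (1 + t a) * (1 + (\<Sum>b\<in>S. t b))"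
    by (simp add: algebra_simps sum_nonneg)
  also have "\<dots> \<le> (1 + t a) * (\<Prod>b\<in>S. 1 + t b)"
    using insert by (intro mult_left_mono) auto
  finally show ?case
    using insert by simp
qed simp

lemma integrable_normal_density_times_power:
  assumes "0 < \<sigma>"
  shows "integrable lborel (\<lambda>t. normal_density m \<sigma> t * t ^ k)"
proof -
  have "normal_density m \<sigma> t * t ^ k =
      (\<Sum>j\<le>k. (of_nat (k choose j) * m ^ (k - j)) * (normal_density m \<sigma> t * (t - m) ^ j))" for t
    using binomial_ring[of "t - m" m k] by (simp add: sum_distrib_left algebra_simps)
  then show ?thesis
    using integrable_normal_moment[OF assms] by simp
qed

lemma integral_normal_density_times_square:
  assumes "0 < \<sigma>"
  shows "(\<integral>t. normal_density m \<sigma> t * t\<^sup>2 \<partial>lborel) = m\<^sup>2 + \<sigma>\<^sup>2"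
proof -
  have "has_bochner_integral lborel (\<lambda>t. normal_density m \<sigma> t * (t - m)\<^sup>2
      + 2 * m * (normal_density m \<sigma> t * (t - m)) + m\<^sup>2 * normal_density m \<sigma> t) (\<sigma>\<^sup>2 + 2 * m * 0 + m\<^sup>2 * 1)"
    using normal_moment_even[OF assms, of m 1] normal_moment_odd[OF assms, of m 0]
      integrable_normal_density[OF assms] integral_normal_density[OF assms]
    by (intro has_bochner_integral_add has_bochner_integral_mult_right)
       (auto simp: power2_eq_square has_bochner_integral_iff)
  then show ?thesis
    by (simp add: has_bochner_integral_iff power2_eq_square algebra_simps)
qed

definition gaussian_pdf :: "'a::euclidean_space \<Rightarrow> real \<Rightarrow> 'a \<Rightarrow> real" where
  "gaussian_pdf \<mu> \<sigma> x = (\<Prod>b\<in>Basis. normal_density (\<mu> \<bullet> b) \<sigma> (x \<bullet> b))"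

lemma gaussian_pdf_nonneg: "0 \<le> gaussian_pdf \<mu> \<sigma> x"
  unfolding gaussian_pdf_def by (intro prod_nonneg) auto

lemma borel_measurable_gaussian_pdf[measurable]: "gaussian_pdf \<mu> \<sigma> \<in> borel_measurable borel"
  unfolding gaussian_pdf_def by measurable

lemma gauss_density_eq_gaussian_pdf: "gauss_density (\<mu>::real^'n) \<sigma> x = gaussian_pdf \<mu> \<sigma> x"
proof -
  have inj: "inj (\<lambda>i::'n. axis i (1::real))"
    by (auto intro: injI simp: axis_eq_axis)
  have Basis: "(Basis :: (real^'n) set) = range (\<lambda>i. axis i 1)"
    by (auto simp: Basis_vec_def)
  have "gaussian_pdf \<mu> \<sigma> x = (\<Prod>i\<in>UNIV. normal_density (\<mu> \<bullet> axis i 1) \<sigma> (x \<bullet> axis i 1))"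
    unfolding gaussian_pdf_def Basis by (subst prod.reindex[OF inj]) (simp add: comp_def)
  then show ?thesis
    by (simp add: gauss_density_def inner_axis)
qed

lemma integral_gaussian_pdf_prod:
  fixes \<mu> :: "'a::euclidean_space" and F :: "'a \<Rightarrow> real \<Rightarrow> real"
  assumes int: "\<And>b. b \<in> Basis \<Longrightarrow> integrable lborel (\<lambda>t. normal_density (\<mu> \<bullet> b) \<sigma> t * F b t)"
  shows "integrable lborel (\<lambda>x. gaussian_pdf \<mu> \<sigma> x * (\<Prod>b\<in>Basis. F b (x \<bullet> b)))"
    and "(\<integral>x. gaussian_pdf \<mu> \<sigma> x * (\<Prod>b\<in>Basis. F b (x \<bullet> b)) \<partial>lborel)
          = (\<Prod>b\<in>Basis. \<integral>t. normal_density (\<mu> \<bullet> b) \<sigma> t * F b t \<partial>lborel)"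
proof -
  define H where "H b t = normal_density (\<mu> \<bullet> b) \<sigma> t * F b t" for b t
  have H_measurable: "H b \<in> borel_measurable borel" if "b \<in> Basis" for b
    using borel_measurable_integrable[OF int[OF that]] unfolding H_def by simp
  have eq: "gaussian_pdf \<mu> \<sigma> x * (\<Prod>b\<in>Basis. F b (x \<bullet> b)) = (\<Prod>b\<in>Basis. H b (x \<bullet> b))" for x
    by (simp add: gaussian_pdf_def H_def prod.distrib)
  interpret P: product_sigma_finite "\<lambda>_::'a. lborel::real measure"
    by (simp add: product_sigma_finite_def sigma_finite_lborel)
  define T where "T f = (\<Sum>b\<in>Basis. f b *\<^sub>R b)" for f :: "'a \<Rightarrow> real"
  have T: "T \<in> measurable (\<Pi>\<^sub>M b\<in>Basis. lborel) borel"
    unfolding T_def by measurable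
  have lborel_eq: "(lborel::'a measure) = distr (\<Pi>\<^sub>M b\<in>Basis. lborel) borel T"
    unfolding T_def by (rule lborel_eq)
  have prod_measurable: "(\<lambda>x. \<Prod>b\<in>Basis. H b (x \<bullet> b)) \<in> borel_measurable borel"
    using H_measurable by (intro borel_measurable_prod) (auto intro: measurable_compose[OF borel_measurable_inner])
  have prod_T: "(\<Prod>b\<in>Basis. H b (T f \<bullet> b)) = (\<Prod>b\<in>Basis. H b (f b))" for f
    unfolding T_def by (intro prod.cong refl) (simp add: inner_sum_left inner_Basis if_distrib cong: if_cong)
  have "integrable (\<Pi>\<^sub>M b\<in>Basis. lborel) (\<lambda>f. \<Prod>b\<in>Basis. H b (f b))"
    using int unfolding H_def by (intro P.product_integrable_prod) auto
  then show "integrable lborel (\<lambda>x. gaussian_pdf \<mu> \<sigma> x * (\<Prod>b\<in>Basis. F b (x \<bullet> b)))"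
    unfolding eq lborel_eq by (subst integrable_distr_eq[OF T prod_measurable]) (simp add: prod_T)
  have "(\<integral>x. (\<Prod>b\<in>Basis. H b (x \<bullet> b)) \<partial>lborel) = (\<integral>f. (\<Prod>b\<in>Basis. H b (T f \<bullet> b)) \<partial>(\<Pi>\<^sub>M b\<in>Basis. lborel))"
    unfolding lborel_eq by (rule integral_distr[OF T prod_measurable])
  also have "\<dots> = (\<Prod>b\<in>Basis. integral\<^sup>L lborel (H b))"
    unfolding prod_T using int unfolding H_def by (intro P.product_integral_prod) auto
  finally show "(\<integral>x. gaussian_pdf \<mu> \<sigma> x * (\<Prod>b\<in>Basis. F b (x \<bullet> b)) \<partial>lborel)
      = (\<Prod>b\<in>Basis. \<integral>t. normal_density (\<mu> \<bullet> b) \<sigma> t * F b t \<partial>lborel)"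
    unfolding eq H_def .
qed

lemma integral_gaussian_pdf:
  fixes \<mu> :: "'a::euclidean_space"
  assumes "0 < \<sigma>"
  shows "integrable lborel (gaussian_pdf \<mu> \<sigma>)" "(\<integral>x. gaussian_pdf \<mu> \<sigma> x \<partial>lborel) = 1"
  using integral_gaussian_pdf_prod[of \<mu> \<sigma> "\<lambda>_ _. 1"] assms by simp_all

lemma integral_gaussian_pdf_coordinate:
  fixes \<mu> :: "'a::euclidean_space"
  assumes "0 < \<sigma>" and b1: "b1 \<in> Basis"
  shows "integrable lborel (\<lambda>x. gaussian_pdf \<mu> \<sigma> x * (x \<bullet> b1))"
    "(\<integral>x. gaussian_pdf \<mu> \<sigma> x * (x \<bullet> b1) \<partial>lborel) = \<mu> \<bullet> b1"
proof -
  define F where "F b t = (if b = b1 then t else 1)" for b and t :: real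
  have "(\<Prod>b\<in>Basis. F b (x \<bullet> b)) = x \<bullet> b1" for x :: 'a
    unfolding F_def by (simp add: prod.delta b1)
  moreover have "(\<integral>t. normal_density (\<mu> \<bullet> b) \<sigma> t * F b t \<partial>lborel) = (if b = b1 then \<mu> \<bullet> b else 1)" for b
    using assms by (simp add: F_def integral_normal_moment_nz_1)
  moreover have "integrable lborel (\<lambda>t. normal_density (\<mu> \<bullet> b) \<sigma> t * F b t)" for b
    using assms by (cases "b = b1") (simp_all add: F_def integrable_normal_moment_nz_1)
  ultimately show "integrable lborel (\<lambda>x. gaussian_pdf \<mu> \<sigma> x * (x \<bullet> b1))"
    "(\<integral>x. gaussian_pdf \<mu> \<sigma> x * (x \<bullet> b1) \<partial>lborel) = \<mu> \<bullet> b1"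
    using integral_gaussian_pdf_prod[of \<mu> \<sigma> F] by (simp_all add: prod.delta b1)
qed

lemma integral_gaussian_pdf_coordinate_pair:
  fixes \<mu> :: "'a::euclidean_space"
  assumes "0 < \<sigma>" and b1: "b1 \<in> Basis" and b2: "b2 \<in> Basis"
  shows "integrable lborel (\<lambda>x. gaussian_pdf \<mu> \<sigma> x * ((x \<bullet> b1) * (x \<bullet> b2)))"
    "(\<integral>x. gaussian_pdf \<mu> \<sigma> x * ((x \<bullet> b1) * (x \<bullet> b2)) \<partial>lborel)
      = (\<mu> \<bullet> b1) * (\<mu> \<bullet> b2) + (if b1 = b2 then \<sigma>\<^sup>2 else 0)"
proof -
  define F where "F b t = (if b = b1 then t else 1) * (if b = b2 then t else 1)" for b and t :: real
  have "(\<Prod>b\<in>Basis. F b (x \<bullet> b)) = (x \<bullet> b1) * (x \<bullet> b2)" for x :: 'a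
    unfolding F_def by (simp add: prod.distrib prod.delta b1 b2)
  moreover have "integrable lborel (\<lambda>t. normal_density (\<mu> \<bullet> b) \<sigma> t * F b t)" for b
    using integrable_normal_density_times_power[OF assms(1), where m = "\<mu> \<bullet> b" and k = 2] assms
    by (cases "b = b1"; cases "b = b2") (simp_all add: F_def power2_eq_square integrable_normal_moment_nz_1)
  moreover have "(\<Prod>b\<in>Basis. \<integral>t. normal_density (\<mu> \<bullet> b) \<sigma> t * F b t \<partial>lborel)
      = (\<mu> \<bullet> b1) * (\<mu> \<bullet> b2) + (if b1 = b2 then \<sigma>\<^sup>2 else 0)"
  proof (cases "b1 = b2")
    case True
    then have "(\<integral>t. normal_density (\<mu> \<bullet> b) \<sigma> t * F b t \<partial>lborel) = (if b = b1 then (\<mu> \<bullet> b)\<^sup>2 + \<sigma>\<^sup>2 else 1)" for b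
      using integral_normal_density_times_square[OF assms(1)] assms
      by (simp add: F_def power2_eq_square)
    then show ?thesis
      using True b1 by (simp add: prod.delta power2_eq_square)
  next
    case False
    then have "(\<integral>t. normal_density (\<mu> \<bullet> b) \<sigma> t * F b t \<partial>lborel)
        = (if b = b1 then \<mu> \<bullet> b else 1) * (if b = b2 then \<mu> \<bullet> b else 1)" for b
      using assms by (auto simp: F_def integral_normal_moment_nz_1)
    then show ?thesis
      using False by (simp add: prod.distrib prod.delta b1 b2)
  qed
  ultimately show "integrable lborel (\<lambda>x. gaussian_pdf \<mu> \<sigma> x * ((x \<bullet> b1) * (x \<bullet> b2)))"
    "(\<integral>x. gaussian_pdf \<mu> \<sigma> x * ((x \<bullet> b1) * (x \<bullet> b2)) \<partial>lborel)
      = (\<mu> \<bullet> b1) * (\<mu> \<bullet> b2) + (if b1 = b2 then \<sigma>\<^sup>2 else 0)"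
    using integral_gaussian_pdf_prod[of \<mu> \<sigma> F] by simp_all
qed

lemma integral_gaussian_pdf_linear:
  fixes \<mu> a :: "'a::euclidean_space"
  assumes "0 < \<sigma>"
  shows "integrable lborel (\<lambda>x. gaussian_pdf \<mu> \<sigma> x * (a \<bullet> x))"
    "(\<integral>x. gaussian_pdf \<mu> \<sigma> x * (a \<bullet> x) \<partial>lborel) = a \<bullet> \<mu>"
proof -
  have eq: "gaussian_pdf \<mu> \<sigma> x * (a \<bullet> x) = (\<Sum>b\<in>Basis. (a \<bullet> b) * (gaussian_pdf \<mu> \<sigma> x * (x \<bullet> b)))" for x
    by (subst euclidean_inner) (simp add: sum_distrib_left algebra_simps)
  show "integrable lborel (\<lambda>x. gaussian_pdf \<mu> \<sigma> x * (a \<bullet> x))"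
    unfolding eq by (intro Bochner_Integration.integrable_sum integrable_mult_right integral_gaussian_pdf_coordinate(1)[OF assms])
  show "(\<integral>x. gaussian_pdf \<mu> \<sigma> x * (a \<bullet> x) \<partial>lborel) = a \<bullet> \<mu>"
    unfolding eq
    by (simp add: Bochner_Integration.integral_sum integral_gaussian_pdf_coordinate[OF assms] euclidean_inner[of a \<mu>])
qed

lemma integral_gaussian_pdf_bilinear:
  fixes \<mu> a c :: "'a::euclidean_space"
  assumes "0 < \<sigma>"
  shows "integrable lborel (\<lambda>x. gaussian_pdf \<mu> \<sigma> x * ((a \<bullet> x) * (c \<bullet> x)))"
    "(\<integral>x. gaussian_pdf \<mu> \<sigma> x * ((a \<bullet> x) * (c \<bullet> x)) \<partial>lborel) = (a \<bullet> \<mu>) * (c \<bullet> \<mu>) + \<sigma>\<^sup>2 * (a \<bullet> c)"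
proof -
  have eq: "gaussian_pdf \<mu> \<sigma> x * ((a \<bullet> x) * (c \<bullet> x)) = (\<Sum>b1\<in>Basis. \<Sum>b2\<in>Basis.
      ((a \<bullet> b1) * (c \<bullet> b2)) * (gaussian_pdf \<mu> \<sigma> x * ((x \<bullet> b1) * (x \<bullet> b2))))" for x
  proof -
    have "(a \<bullet> x) * (c \<bullet> x) = (\<Sum>b1\<in>Basis. \<Sum>b2\<in>Basis. ((a \<bullet> b1) * (c \<bullet> b2)) * ((x \<bullet> b1) * (x \<bullet> b2)))"
      unfolding euclidean_inner[of a x] euclidean_inner[of c x] sum_product by (simp add: algebra_simps)
    then show ?thesis
      by (simp add: sum_distrib_left algebra_simps)
  qed
  show "integrable lborel (\<lambda>x. gaussian_pdf \<mu> \<sigma> x * ((a \<bullet> x) * (c \<bullet> x)))"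
    unfolding eq
    by (intro Bochner_Integration.integrable_sum integrable_mult_right integral_gaussian_pdf_coordinate_pair(1)[OF assms])
  have "(\<integral>x. gaussian_pdf \<mu> \<sigma> x * ((a \<bullet> x) * (c \<bullet> x)) \<partial>lborel) = (\<Sum>b1\<in>Basis. \<Sum>b2\<in>Basis.
      ((a \<bullet> b1) * (c \<bullet> b2)) * ((\<mu> \<bullet> b1) * (\<mu> \<bullet> b2) + (if b1 = b2 then \<sigma>\<^sup>2 else 0)))"
    unfolding eq by (simp add: Bochner_Integration.integral_sum integral_gaussian_pdf_coordinate_pair[OF assms])
  also have "\<dots> = (\<Sum>b\<in>Basis. (a \<bullet> b) * (\<mu> \<bullet> b)) * (\<Sum>b\<in>Basis. (c \<bullet> b) * (\<mu> \<bullet> b))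
      + \<sigma>\<^sup>2 * (\<Sum>b\<in>Basis. (a \<bullet> b) * (c \<bullet> b))"
    by (simp add: distrib_left sum.distrib sum_product sum_distrib_left if_distrib[of "\<lambda>t. _ * t"] mult_ac
        cong: if_cong) (subst sum.swap, simp add: mult_ac)
  finally show "(\<integral>x. gaussian_pdf \<mu> \<sigma> x * ((a \<bullet> x) * (c \<bullet> x)) \<partial>lborel) = (a \<bullet> \<mu>) * (c \<bullet> \<mu>) + \<sigma>\<^sup>2 * (a \<bullet> c)"
    by (simp only: euclidean_inner[symmetric])
qed

lemma integrable_gaussian_pdf_poly_weight:
  fixes \<mu> :: "'a::euclidean_space"
  assumes "0 < \<sigma>"
  shows "integrable lborel (\<lambda>x. gaussian_pdf \<mu> \<sigma> x * poly_weight x)"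
  unfolding poly_weight_def
proof (rule Bochner_Integration.integrable_bound)
  have "normal_density m \<sigma> t * (1 + t\<^sup>2) ^ 3 = normal_density m \<sigma> t * t ^ 0
      + 3 * (normal_density m \<sigma> t * t ^ 2) + 3 * (normal_density m \<sigma> t * t ^ 4) + normal_density m \<sigma> t * t ^ 6"
    for m t :: real
    by (simp add: algebra_simps power2_eq_square power3_eq_cube numeral_eq_Suc)
  then have "integrable lborel (\<lambda>t. normal_density m \<sigma> t * (1 + t\<^sup>2) ^ 3)" for m
    by (simp only:) (intro Bochner_Integration.integrable_add integrable_mult_right
        integrable_normal_density_times_power[OF assms])
  then show "integrable lborel (\<lambda>x. gaussian_pdf \<mu> \<sigma> x * (\<Prod>b\<in>Basis. (1 + (x \<bullet> b)\<^sup>2) ^ 3))"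
    using integral_gaussian_pdf_prod(1)[of \<mu> \<sigma> "\<lambda>_ t. (1 + t\<^sup>2) ^ 3"] by simp
  show "(\<lambda>x. gaussian_pdf \<mu> \<sigma> x * (1 + (norm x)\<^sup>2) ^ 3) \<in> borel_measurable lborel"
    by measurable
  have "(1 + (norm x)\<^sup>2) ^ 3 \<le> (\<Prod>b\<in>Basis. (1 + (x \<bullet> b)\<^sup>2) ^ 3)" for x :: 'a
  proof -
    have "(norm x)\<^sup>2 = (\<Sum>b\<in>Basis. (x \<bullet> b)\<^sup>2)"
      unfolding power2_norm_eq_inner by (subst euclidean_inner) (simp add: power2_eq_square)
    then have "1 + (norm x)\<^sup>2 \<le> (\<Prod>b\<in>Basis. 1 + (x \<bullet> b)\<^sup>2)"
      using one_add_sum_le_prod_one_add[of Basis "\<lambda>b. (x \<bullet> b)\<^sup>2"] by simp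
    then show ?thesis
      by (simp add: power_mono prod_power_distrib[symmetric])
  qed
  then show "AE x in lborel. norm (gaussian_pdf \<mu> \<sigma> x * (1 + (norm x)\<^sup>2) ^ 3)
      \<le> norm (gaussian_pdf \<mu> \<sigma> x * (\<Prod>b\<in>Basis. (1 + (x \<bullet> b)\<^sup>2) ^ 3))"
    by (intro AE_I2) (simp add: abs_mult gaussian_pdf_nonneg mult_left_mono prod_nonneg)
qed

section \<open>Independent samples and averages\<close>

context prob_space
begin

lemma integral_PiM_prod_subset:
  fixes f :: "'i \<Rightarrow> 'a \<Rightarrow> real"
  assumes I: "finite I" "J \<subseteq> I" and f: "\<And>j. j \<in> J \<Longrightarrow> integrable M (f j)"
  shows "integrable (PiM I (\<lambda>_. M)) (\<lambda>\<omega>. \<Prod>j\<in>J. f j (\<omega> j))"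
    "(\<integral>\<omega>. (\<Prod>j\<in>J. f j (\<omega> j)) \<partial>PiM I (\<lambda>_. M)) = (\<Prod>j\<in>J. integral\<^sup>L M (f j))"
proof -
  interpret P: product_prob_space "\<lambda>_::'i. M"
    by unfold_locales
  define F where "F i x = (if i \<in> J then f i x else 1)" for i x
  have F: "integrable M (F i)" for i
    using f unfolding F_def by (cases "i \<in> J") simp_all
  have prod_F: "(\<Prod>i\<in>I. F i (\<omega> i)) = (\<Prod>j\<in>J. f j (\<omega> j))" for \<omega>
    using I by (simp add: F_def prod.If_cases Int_absorb1)
  have "integral\<^sup>L M (F i) = (if i \<in> J then integral\<^sup>L M (f i) else 1)" for i
    unfolding F_def by (cases "i \<in> J") (simp_all add: prob_space)
  then have prod_integral_F: "(\<Prod>i\<in>I. integral\<^sup>L M (F i)) = (\<Prod>j\<in>J. integral\<^sup>L M (f j))"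
    using I by (simp add: prod.If_cases Int_absorb1)
  show "integrable (PiM I (\<lambda>_. M)) (\<lambda>\<omega>. \<Prod>j\<in>J. f j (\<omega> j))"
    using P.product_integrable_prod[of I F] I F by (simp add: prod_F)
  show "(\<integral>\<omega>. (\<Prod>j\<in>J. f j (\<omega> j)) \<partial>PiM I (\<lambda>_. M)) = (\<Prod>j\<in>J. integral\<^sup>L M (f j))"
    using P.product_integral_prod[of I F] I F by (simp add: prod_F prod_integral_F)
qed

lemma integral_PiM_component:
  fixes f :: "'a \<Rightarrow> real"
  assumes "finite I" "a \<in> I" "integrable M f"
  shows "integrable (PiM I (\<lambda>_. M)) (\<lambda>\<omega>. f (\<omega> a))"
    "(\<integral>\<omega>. f (\<omega> a) \<partial>PiM I (\<lambda>_. M)) = integral\<^sup>L M f"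
  using integral_PiM_prod_subset[of I "{a}" "\<lambda>_. f"] assms by simp_all

lemma integral_PiM_sum_prod2:
  fixes A B :: "'s \<Rightarrow> 'a \<Rightarrow> real"
  assumes I: "finite I" "a \<in> I" "b \<in> I" "a \<noteq> b" and "finite S"
    and "\<And>i. integrable M (A i)" "\<And>i. integrable M (B i)"
  shows "integrable (PiM I (\<lambda>_. M)) (\<lambda>\<omega>. \<Sum>i\<in>S. A i (\<omega> a) * B i (\<omega> b))"
    "(\<integral>\<omega>. (\<Sum>i\<in>S. A i (\<omega> a) * B i (\<omega> b)) \<partial>PiM I (\<lambda>_. M))
      = (\<Sum>i\<in>S. integral\<^sup>L M (A i) * integral\<^sup>L M (B i))"
proof -
  have "integrable (PiM I (\<lambda>_. M)) (\<lambda>\<omega>. A i (\<omega> a) * B i (\<omega> b)) \<and>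
      (\<integral>\<omega>. A i (\<omega> a) * B i (\<omega> b) \<partial>PiM I (\<lambda>_. M)) = integral\<^sup>L M (A i) * integral\<^sup>L M (B i)" for i
    using integral_PiM_prod_subset[of I "{a, b}" "\<lambda>j. if j = a then A i else B i"] assms by auto
  then show "integrable (PiM I (\<lambda>_. M)) (\<lambda>\<omega>. \<Sum>i\<in>S. A i (\<omega> a) * B i (\<omega> b))"
    "(\<integral>\<omega>. (\<Sum>i\<in>S. A i (\<omega> a) * B i (\<omega> b)) \<partial>PiM I (\<lambda>_. M))
      = (\<Sum>i\<in>S. integral\<^sup>L M (A i) * integral\<^sup>L M (B i))"
    by (simp_all add: Bochner_Integration.integral_sum)
qed

lemma integral_PiM_sum_prod3:
  fixes A B C :: "'s \<Rightarrow> 'a \<Rightarrow> real"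
  assumes I: "finite I" "a \<in> I" "b \<in> I" "c \<in> I" "a \<noteq> b" "a \<noteq> c" "b \<noteq> c" and "finite S"
    and "\<And>i. integrable M (A i)" "\<And>i. integrable M (B i)" "\<And>i. integrable M (C i)"
  shows "integrable (PiM I (\<lambda>_. M)) (\<lambda>\<omega>. \<Sum>i\<in>S. A i (\<omega> a) * B i (\<omega> b) * C i (\<omega> c))"
    "(\<integral>\<omega>. (\<Sum>i\<in>S. A i (\<omega> a) * B i (\<omega> b) * C i (\<omega> c)) \<partial>PiM I (\<lambda>_. M))
      = (\<Sum>i\<in>S. integral\<^sup>L M (A i) * integral\<^sup>L M (B i) * integral\<^sup>L M (C i))"
proof -
  have "integrable (PiM I (\<lambda>_. M)) (\<lambda>\<omega>. A i (\<omega> a) * B i (\<omega> b) * C i (\<omega> c)) \<and>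
      (\<integral>\<omega>. A i (\<omega> a) * B i (\<omega> b) * C i (\<omega> c) \<partial>PiM I (\<lambda>_. M))
        = integral\<^sup>L M (A i) * integral\<^sup>L M (B i) * integral\<^sup>L M (C i)" for i
    using integral_PiM_prod_subset[of I "{a, b, c}" "\<lambda>j. if j = a then A i else if j = b then B i else C i"]
      assms by (auto simp: mult_ac)
  then show "integrable (PiM I (\<lambda>_. M)) (\<lambda>\<omega>. \<Sum>i\<in>S. A i (\<omega> a) * B i (\<omega> b) * C i (\<omega> c))"
    "(\<integral>\<omega>. (\<Sum>i\<in>S. A i (\<omega> a) * B i (\<omega> b) * C i (\<omega> c)) \<partial>PiM I (\<lambda>_. M))
      = (\<Sum>i\<in>S. integral\<^sup>L M (A i) * integral\<^sup>L M (B i) * integral\<^sup>L M (C i))"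
    by (simp_all add: Bochner_Integration.integral_sum)
qed

lemma integrable_PiM_dominated3:
  fixes f :: "('i \<Rightarrow> 'a) \<Rightarrow> 'b::{banach, second_countable_topology}"
  assumes I: "finite I" "a \<in> I" "b \<in> I" "c \<in> I" and w: "integrable M w"
    and f: "f \<in> borel_measurable (PiM I (\<lambda>_. M))"
    and bound: "\<And>\<omega>. norm (f \<omega>) \<le> K * (w (\<omega> a) + w (\<omega> b) + w (\<omega> c))"
  shows "integrable (PiM I (\<lambda>_. M)) f" "norm (integral\<^sup>L (PiM I (\<lambda>_. M)) f) \<le> 3 * K * integral\<^sup>L M w"
proof -
  define g where "g \<omega> = K * (w (\<omega> a) + w (\<omega> b) + w (\<omega> c))" for \<omega>
  have g: "integrable (PiM I (\<lambda>_. M)) g" "integral\<^sup>L (PiM I (\<lambda>_. M)) g = 3 * K * integral\<^sup>L M w"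
    using integral_PiM_component[OF I(1) _ w] I unfolding g_def by (simp_all add: algebra_simps)
  show f_int: "integrable (PiM I (\<lambda>_. M)) f"
    using bound by (intro Bochner_Integration.integrable_bound[OF g(1) f] AE_I2)
      (simp add: g_def order_trans[OF _ abs_ge_self])
  have "norm (integral\<^sup>L (PiM I (\<lambda>_. M)) f) \<le> (\<integral>\<omega>. norm (f \<omega>) \<partial>PiM I (\<lambda>_. M))"
    by (rule integral_norm_bound)
  also have "\<dots> \<le> integral\<^sup>L (PiM I (\<lambda>_. M)) g"
    using f_int g(1) bound by (intro integral_mono) (auto simp: g_def)
  finally show "norm (integral\<^sup>L (PiM I (\<lambda>_. M)) f) \<le> 3 * K * integral\<^sup>L M w"
    using g(2) by simp
qed

end

lemma integral_double_sum:
  fixes f :: "'k \<Rightarrow> 'm \<Rightarrow> 'a \<Rightarrow> 'b::{banach, second_countable_topology}"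
  assumes "\<And>k m. k \<in> A \<Longrightarrow> m \<in> B \<Longrightarrow> integrable M (f k m)"
  shows "(\<integral>x. (\<Sum>k\<in>A. \<Sum>m\<in>B. f k m x) \<partial>M) = (\<Sum>k\<in>A. \<Sum>m\<in>B. integral\<^sup>L M (f k m))"
proof -
  have "(\<integral>x. (\<Sum>k\<in>A. \<Sum>m\<in>B. f k m x) \<partial>M) = (\<Sum>k\<in>A. \<integral>x. (\<Sum>m\<in>B. f k m x) \<partial>M)"
    using assms by (intro Bochner_Integration.integral_sum Bochner_Integration.integrable_sum)
  also have "\<dots> = (\<Sum>k\<in>A. \<Sum>m\<in>B. integral\<^sup>L M (f k m))"
    using assms by (intro sum.cong refl Bochner_Integration.integral_sum)
  finally show ?thesis .
qed

lemma cond_var_event_eq: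
  fixes Y :: "'a \<Rightarrow> 'b::{real_inner, banach, second_countable_topology}"
  assumes "finite_measure M" "A \<in> sets M" "measure M A \<noteq> 0"
    and Y: "integrable M (\<lambda>\<omega>. indicator A \<omega> *\<^sub>R Y \<omega>)"
    and Y2: "integrable M (\<lambda>\<omega>. indicator A \<omega> * (norm (Y \<omega>))\<^sup>2)"
  shows "cond_var_event M A Y = cond_exp_event M A (\<lambda>\<omega>. (norm (Y \<omega>))\<^sup>2) - (norm (cond_exp_event M A Y))\<^sup>2"
proof -
  define m where "m = measure M A"
  define v where "v = cond_exp_event M A Y"
  have S: "(\<integral>\<omega>. indicator A \<omega> *\<^sub>R Y \<omega> \<partial>M) = m *\<^sub>R v"
    using assms(3) by (simp add: v_def m_def cond_exp_event_def)
  have indicator: "integrable M (indicator A :: 'a \<Rightarrow> real)" "integral\<^sup>L M (indicator A) = m"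
    using assms(1,2) unfolding m_def by (simp_all add: finite_measure.integrable_const_bound[where B=1])
  have cross: "integrable M (\<lambda>\<omega>. 2 * ((indicator A \<omega> *\<^sub>R Y \<omega>) \<bullet> v))"
    "(\<integral>\<omega>. indicator A \<omega> * (Y \<omega> \<bullet> v) \<partial>M) = m * (v \<bullet> v)"
    using integrable_inner_left[OF Y, of v] integral_inner_left[OF Y, of v] by (simp_all add: S)
  have "indicator A \<omega> *\<^sub>R (norm (Y \<omega> - v))\<^sup>2
      = indicator A \<omega> * (norm (Y \<omega>))\<^sup>2 - 2 * ((indicator A \<omega> *\<^sub>R Y \<omega>) \<bullet> v) + (norm v)\<^sup>2 * indicator A \<omega>" for \<omega>
    unfolding power2_norm_eq_inner by (simp add: inner_diff_left inner_diff_right inner_commute ring_distribs)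
  then have "(\<integral>\<omega>. indicator A \<omega> *\<^sub>R (norm (Y \<omega> - v))\<^sup>2 \<partial>M)
      = (\<integral>\<omega>. indicator A \<omega> * (norm (Y \<omega>))\<^sup>2 \<partial>M) - 2 * (m * (v \<bullet> v)) + (norm v)\<^sup>2 * m"
    using Y2 cross indicator by (simp add: Bochner_Integration.integral_add Bochner_Integration.integral_diff)
  also have "\<dots> = m * ((\<integral>\<omega>. indicator A \<omega> * (norm (Y \<omega>))\<^sup>2 \<partial>M) / m - (norm v)\<^sup>2)"
    using assms(3) by (simp add: m_def power2_norm_eq_inner right_diff_distrib)
  finally show ?thesis
    using assms(3) unfolding cond_var_event_def v_def[symmetric] unfolding cond_exp_event_def m_def[symmetric]
    by simp
qed

lemma tendsto_of_norm_diff_le_inverse: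
  fixes f :: "nat \<Rightarrow> 'a::real_normed_vector"
  assumes "\<And>L. 1 \<le> L \<Longrightarrow> norm (f L - c) \<le> D / real L"
  shows "f \<longlonglongrightarrow> c"
proof -
  have "(\<lambda>L. f L - c) \<longlonglongrightarrow> 0"
    using assms by (intro Lim_null_comparison[OF _ lim_const_over_n] eventually_sequentiallyI[of 1])
  then show ?thesis
    by (simp add: LIM_zero_iff)
qed

lemma average_deviation_one_exception:
  fixes E :: "nat \<Rightarrow> 'a::real_normed_vector"
  assumes "l < L" "\<And>k. k < L \<Longrightarrow> norm (E k) \<le> B" "\<And>k. k < L \<Longrightarrow> k \<noteq> l \<Longrightarrow> E k = C"
  shows "norm ((1 / real L) *\<^sub>R (\<Sum>k<L. E k) - C) \<le> (B + norm C) / real L"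
proof -
  have "(\<Sum>k<L. E k) - real L *\<^sub>R C = (\<Sum>k<L. E k - C)"
    by (simp add: sum_subtractf sum_constant_scaleR)
  also have "\<dots> = E l - C"
    using assms by (subst sum.mono_neutral_right[of "{..<L}" "{l}"]) auto
  finally have "norm ((\<Sum>k<L. E k) - real L *\<^sub>R C) \<le> B + norm C"
    using assms(1,2) norm_triangle_ineq4[of "E l" C] by fastforce
  moreover have "(1 / real L) *\<^sub>R (\<Sum>k<L. E k) - C = (1 / real L) *\<^sub>R ((\<Sum>k<L. E k) - real L *\<^sub>R C)"
    using assms(1) by (simp add: scaleR_diff_right)
  ultimately show ?thesis
    by (simp add: divide_right_mono)
qed

lemma double_average_deviation:
  fixes E :: "nat \<Rightarrow> nat \<Rightarrow> real"
  assumes "l < L" and bounded: "\<And>k m. k < L \<Longrightarrow> m < L \<Longrightarrow> \<bar>E k m\<bar> \<le> B"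
    and distinct: "\<And>k m. k < L \<Longrightarrow> m < L \<Longrightarrow> k \<noteq> l \<Longrightarrow> m \<noteq> l \<Longrightarrow> k \<noteq> m \<Longrightarrow> E k m = C"
  shows "\<bar>(\<Sum>k<L. \<Sum>m<L. E k m) / (real L)\<^sup>2 - C\<bar> \<le> 3 * (B + \<bar>C\<bar>) / real L"
proof -
  have deviation: "\<bar>E k m - C\<bar> \<le> (B + \<bar>C\<bar>) * (of_bool (k = l) + of_bool (m = l) + of_bool (k = m))"
    if "k < L" "m < L" for k m
  proof (cases "k \<noteq> l \<and> m \<noteq> l \<and> k \<noteq> m")
    case True
    then show ?thesis
      using distinct[OF that] by simp
  next
    case False
    then have "1 \<le> of_bool (k = l) + of_bool (m = l) + (of_bool (k = m) :: real)"
      by auto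
    moreover have "0 \<le> B + \<bar>C\<bar>"
      using order_trans[OF abs_ge_zero bounded[OF that]] by simp
    ultimately have "(B + \<bar>C\<bar>) * 1 \<le> (B + \<bar>C\<bar>) * (of_bool (k = l) + of_bool (m = l) + of_bool (k = m))"
      by (rule mult_left_mono)
    moreover have "\<bar>E k m - C\<bar> \<le> B + \<bar>C\<bar>"
      using bounded[OF that] abs_triangle_ineq4[of "E k m" C] by linarith
    ultimately show ?thesis
      by simp
  qed
  have "\<bar>(\<Sum>k<L. \<Sum>m<L. E k m) - (real L)\<^sup>2 * C\<bar> = \<bar>\<Sum>k<L. \<Sum>m<L. E k m - C\<bar>"
    by (simp add: sum_subtractf power2_eq_square)
  also have "\<dots> \<le> (\<Sum>k<L. \<Sum>m<L. \<bar>E k m - C\<bar>)"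
    by (rule order.trans[OF sum_abs]) (intro sum_mono sum_abs)
  also have "\<dots> \<le> (\<Sum>k<L. \<Sum>m<L. (B + \<bar>C\<bar>) * (of_bool (k = l) + of_bool (m = l) + of_bool (k = m)))"
    by (intro sum_mono deviation) auto
  also have "\<dots> = 3 * real L * (B + \<bar>C\<bar>)"
    using assms(1) by (simp add: sum.distrib sum_distrib_left[symmetric] algebra_simps)
  finally have "\<bar>(\<Sum>k<L. \<Sum>m<L. E k m) - (real L)\<^sup>2 * C\<bar> / (real L)\<^sup>2 \<le> 3 * real L * (B + \<bar>C\<bar>) / (real L)\<^sup>2"
    by (rule divide_right_mono) simp
  moreover have "(\<Sum>k<L. \<Sum>m<L. E k m) / (real L)\<^sup>2 - C = ((\<Sum>k<L. \<Sum>m<L. E k m) - (real L)\<^sup>2 * C) / (real L)\<^sup>2"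
    using assms(1) by (simp add: field_simps)
  ultimately show ?thesis
    using assms(1) by (simp add: abs_divide power2_eq_square)
qed

lemma norm_sq_scaleR_sum:
  fixes a :: "nat \<Rightarrow> 'a::real_inner"
  shows "(norm ((1 / real L) *\<^sub>R (\<Sum>k<L. a k)))\<^sup>2 = (\<Sum>k<L. \<Sum>m<L. a k \<bullet> a m) / (real L)\<^sup>2"
proof -
  have "(\<Sum>k<L. a k) \<bullet> (\<Sum>m<L. a m) = (\<Sum>k<L. \<Sum>m<L. a k \<bullet> a m)"
    unfolding inner_sum_left by (simp only: inner_sum_right)
  then show ?thesis
    unfolding power2_norm_eq_inner by (simp add: power2_eq_square)
qed

section \<open>The two-component Gaussian mixture\<close>

lemma integral_count_space_pair_lborel:
  fixes h :: "'z::finite \<times> 'a::euclidean_space \<Rightarrow> real"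
  assumes h: "h \<in> borel_measurable (count_space UNIV \<Otimes>\<^sub>M lborel)"
    and sections: "\<And>z. integrable lborel (\<lambda>x. h (z, x))"
  shows "integrable (count_space UNIV \<Otimes>\<^sub>M lborel) h"
    "integral\<^sup>L (count_space UNIV \<Otimes>\<^sub>M lborel) h = (\<Sum>z\<in>UNIV. \<integral>x. h (z, x) \<partial>lborel)"
proof -
  interpret P: pair_sigma_finite "count_space (UNIV::'z set)" "lborel::'a measure"
    by (intro pair_sigma_finite.intro sigma_finite_measure_count_space_finite)
       (auto simp: lborel.sigma_finite_measure_axioms)
  have "(\<integral>\<^sup>+ p. ennreal (norm (h p)) \<partial>(count_space UNIV \<Otimes>\<^sub>M lborel))
      = (\<Sum>z\<in>UNIV. \<integral>\<^sup>+ x. ennreal (norm (h (z, x))) \<partial>lborel)"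
    using h by (simp add: lborel.nn_integral_fst[symmetric] nn_integral_count_space_finite)
  also have "\<dots> < \<infinity>"
    using sections unfolding integrable_iff_bounded by (simp add: less_top[symmetric])
  finally show integrable: "integrable (count_space UNIV \<Otimes>\<^sub>M lborel) h"
    unfolding integrable_iff_bounded using h by simp
  show "integral\<^sup>L (count_space UNIV \<Otimes>\<^sub>M lborel) h = (\<Sum>z\<in>UNIV. \<integral>x. h (z, x) \<partial>lborel)"
    using P.integral_fst'[OF integrable] by (simp add: lebesgue_integral_count_space_finite)
qed

locale gaussian_mixture =
  fixes \<mu>0 \<mu>1 :: "real^'n" and \<sigma> :: real
  assumes sigma_pos: "0 < \<sigma>"
begin

definition mean :: "bool \<Rightarrow> real^'n" where
  "mean c = (if c then \<mu>1 else \<mu>0)"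

abbreviation M :: "(bool \<times> (real^'n)) measure" where
  "M \<equiv> sample_M \<mu>0 \<mu>1 \<sigma>"

lemma sample_M_eq_density:
  "M = density (count_space UNIV \<Otimes>\<^sub>M lborel) (\<lambda>p. ennreal (gaussian_pdf (mean (fst p)) \<sigma> (snd p) / 2))"
  unfolding sample_M_def mean_def
  by (intro arg_cong[where f="density _"] ext) (auto simp: gauss_density_eq_gaussian_pdf split: prod.split)

lemma sets_sample_M[measurable_cong]: "sets M = sets (count_space UNIV \<Otimes>\<^sub>M lborel)"
  unfolding sample_M_eq_density by simp

lemma integral_sample_M:
  fixes f :: "bool \<times> (real^'n) \<Rightarrow> real"
  assumes f: "\<And>z. (\<lambda>x. f (z, x)) \<in> borel_measurable borel"
    and sections: "\<And>z. integrable lborel (\<lambda>x. gaussian_pdf (mean z) \<sigma> x * f (z, x))"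
  shows "integrable M f"
    "integral\<^sup>L M f = ((\<integral>x. gaussian_pdf \<mu>0 \<sigma> x * f (False, x) \<partial>lborel)
      + (\<integral>x. gaussian_pdf \<mu>1 \<sigma> x * f (True, x) \<partial>lborel)) / 2"
proof -
  define g where "g p = gaussian_pdf (mean (fst p)) \<sigma> (snd p) / 2" for p :: "bool \<times> (real^'n)"
  have [measurable]: "f \<in> borel_measurable (count_space UNIV \<Otimes>\<^sub>M lborel)"
    using f by (intro measurable_pair_measure_countable1) auto
  have [measurable]: "g \<in> borel_measurable (count_space UNIV \<Otimes>\<^sub>M lborel)"
    unfolding g_def by (intro measurable_pair_measure_countable1) auto
  have g_nonneg: "AE p in count_space UNIV \<Otimes>\<^sub>M lborel. 0 \<le> g p"
    by (simp add: g_def gaussian_pdf_nonneg)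
  have M_eq: "M = density (count_space UNIV \<Otimes>\<^sub>M lborel) g"
    unfolding sample_M_eq_density g_def ..
  have gf: "(\<lambda>p. g p *\<^sub>R f p) \<in> borel_measurable (count_space UNIV \<Otimes>\<^sub>M lborel)"
    by measurable
  have "integrable lborel (\<lambda>x. g (z, x) *\<^sub>R f (z, x))" for z
    using sections[of z] by (simp add: g_def)
  note pair = integral_count_space_pair_lborel[OF gf this]
  show "integrable M f"
    unfolding M_eq using pair(1) g_nonneg by (simp add: integrable_density)
  have "integral\<^sup>L M f = (\<integral>p. g p *\<^sub>R f p \<partial>(count_space UNIV \<Otimes>\<^sub>M lborel))"
    unfolding M_eq using g_nonneg by (simp add: integral_density)
  also have "\<dots> = ((\<integral>x. gaussian_pdf \<mu>0 \<sigma> x * f (False, x) \<partial>lborel)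
      + (\<integral>x. gaussian_pdf \<mu>1 \<sigma> x * f (True, x) \<partial>lborel)) / 2"
    using pair(2) by (simp add: UNIV_bool g_def mean_def add_divide_distrib)
  finally show "integral\<^sup>L M f = ((\<integral>x. gaussian_pdf \<mu>0 \<sigma> x * f (False, x) \<partial>lborel)
      + (\<integral>x. gaussian_pdf \<mu>1 \<sigma> x * f (True, x) \<partial>lborel)) / 2" .
qed

lemma integral_sample_M_snd:
  fixes g :: "real^'n \<Rightarrow> real"
  assumes g: "g \<in> borel_measurable borel"
    and "integrable lborel (\<lambda>x. gaussian_pdf \<mu>0 \<sigma> x * g x)" "integrable lborel (\<lambda>x. gaussian_pdf \<mu>1 \<sigma> x * g x)"
  shows "integrable M (\<lambda>p. g (snd p))"
    "(\<integral>p. g (snd p) \<partial>M) = ((\<integral>x. gaussian_pdf \<mu>0 \<sigma> x * g x \<partial>lborel) + (\<integral>x. gaussian_pdf \<mu>1 \<sigma> x * g x \<partial>lborel)) / 2"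
  using integral_sample_M[of "\<lambda>p. g (snd p)"] assms by (simp_all add: mean_def)

lemma integral_sample_M_label:
  fixes g :: "real^'n \<Rightarrow> real"
  assumes g: "g \<in> borel_measurable borel" and "integrable lborel (\<lambda>x. gaussian_pdf (mean c) \<sigma> x * g x)"
  shows "integrable M (\<lambda>p. of_bool (fst p = c) * g (snd p))"
    "(\<integral>p. of_bool (fst p = c) * g (snd p) \<partial>M) = (\<integral>x. gaussian_pdf (mean c) \<sigma> x * g x \<partial>lborel) / 2"
  using integral_sample_M[of "\<lambda>p. of_bool (fst p = c) * g (snd p)"] assms
  by (cases c; simp add: mean_def)+

lemma prob_space_sample_M: "prob_space M"
proof (rule prob_spaceI)
  have "integrable lborel (\<lambda>x. gaussian_pdf \<mu> \<sigma> x * 1)" for \<mu>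
    using integral_gaussian_pdf(1)[OF sigma_pos] by simp
  note one = integral_sample_M_snd[of "\<lambda>_. 1", OF _ this this]
  have "emeasure M (space M) < \<infinity>"
    using one(1) by (simp add: integrable_iff_bounded)
  moreover have "measure M (space M) = 1"
    using one(2) by (simp add: integral_gaussian_pdf(2)[OF sigma_pos])
  ultimately show "emeasure M (space M) = 1"
    by (simp add: emeasure_eq_ennreal_measure less_top)
qed

sublocale sample: prob_space M
  by (rule prob_space_sample_M)

lemma integral_label:
  "integrable M (\<lambda>p. of_bool (fst p = c) :: real)" "(\<integral>p. of_bool (fst p = c) \<partial>M) = (1 / 2 :: real)"
proof -
  have "integrable lborel (\<lambda>x. gaussian_pdf (mean c) \<sigma> x * 1)"
    using integral_gaussian_pdf(1)[OF sigma_pos] by simp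
  note r = integral_sample_M_label[of "\<lambda>_. 1", OF _ this]
  show "integrable M (\<lambda>p. of_bool (fst p = c) :: real)" "(\<integral>p. of_bool (fst p = c) \<partial>M) = (1 / 2 :: real)"
    using r by (simp_all add: integral_gaussian_pdf(2)[OF sigma_pos])
qed

lemma integral_label_linear:
  "integrable M (\<lambda>p. of_bool (fst p = c) * (a \<bullet> snd p))"
  "(\<integral>p. of_bool (fst p = c) * (a \<bullet> snd p) \<partial>M) = (a \<bullet> mean c) / 2"
proof -
  have "(\<lambda>x. a \<bullet> x) \<in> borel_measurable borel"
    by measurable
  note r = integral_sample_M_label[OF this integral_gaussian_pdf_linear(1)[OF sigma_pos]]
  show "integrable M (\<lambda>p. of_bool (fst p = c) * (a \<bullet> snd p))"
    "(\<integral>p. of_bool (fst p = c) * (a \<bullet> snd p) \<partial>M) = (a \<bullet> mean c) / 2"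
    using r by (simp_all add: integral_gaussian_pdf_linear(2)[OF sigma_pos])
qed

lemma integral_label_bilinear:
  "integrable M (\<lambda>p. of_bool (fst p = c) * ((a \<bullet> snd p) * (b \<bullet> snd p)))"
  "(\<integral>p. of_bool (fst p = c) * ((a \<bullet> snd p) * (b \<bullet> snd p)) \<partial>M)
    = ((a \<bullet> mean c) * (b \<bullet> mean c) + \<sigma>\<^sup>2 * (a \<bullet> b)) / 2"
proof -
  have "(\<lambda>x. (a \<bullet> x) * (b \<bullet> x)) \<in> borel_measurable borel"
    by measurable
  note r = integral_sample_M_label[OF this integral_gaussian_pdf_bilinear(1)[OF sigma_pos]]
  show "integrable M (\<lambda>p. of_bool (fst p = c) * ((a \<bullet> snd p) * (b \<bullet> snd p)))"
    "(\<integral>p. of_bool (fst p = c) * ((a \<bullet> snd p) * (b \<bullet> snd p)) \<partial>M)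
      = ((a \<bullet> mean c) * (b \<bullet> mean c) + \<sigma>\<^sup>2 * (a \<bullet> b)) / 2"
    using r by (simp_all add: integral_gaussian_pdf_bilinear(2)[OF sigma_pos])
qed

lemma integral_bilinear:
  "integrable M (\<lambda>p. (a \<bullet> snd p) * (b \<bullet> snd p))"
  "(\<integral>p. (a \<bullet> snd p) * (b \<bullet> snd p) \<partial>M)
    = ((a \<bullet> \<mu>0) * (b \<bullet> \<mu>0) + (a \<bullet> \<mu>1) * (b \<bullet> \<mu>1)) / 2 + \<sigma>\<^sup>2 * (a \<bullet> b)"
proof -
  have "(\<lambda>x. (a \<bullet> x) * (b \<bullet> x)) \<in> borel_measurable borel"
    by measurable
  note r = integral_sample_M_snd[OF this integral_gaussian_pdf_bilinear(1)[OF sigma_pos] integral_gaussian_pdf_bilinear(1)[OF sigma_pos]]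
  show "integrable M (\<lambda>p. (a \<bullet> snd p) * (b \<bullet> snd p))"
    "(\<integral>p. (a \<bullet> snd p) * (b \<bullet> snd p) \<partial>M)
      = ((a \<bullet> \<mu>0) * (b \<bullet> \<mu>0) + (a \<bullet> \<mu>1) * (b \<bullet> \<mu>1)) / 2 + \<sigma>\<^sup>2 * (a \<bullet> b)"
    using r by (simp_all only: integral_gaussian_pdf_bilinear(2)[OF sigma_pos]) (simp add: field_simps)
qed

lemma integrable_poly_weight: "integrable M (\<lambda>p. poly_weight (snd p))"
proof -
  have "(poly_weight :: real^'n \<Rightarrow> real) \<in> borel_measurable borel"
    unfolding poly_weight_def by measurable
  then show ?thesis
    using integral_sample_M_snd(1)[OF _ integrable_gaussian_pdf_poly_weight[OF sigma_pos] integrable_gaussian_pdf_poly_weight[OF sigma_pos]]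
    by simp
qed

lemma measurable_snd_component[measurable]:
  "i \<in> I \<Longrightarrow> (\<lambda>\<omega>. snd (\<omega> i)) \<in> borel_measurable (PiM I (\<lambda>_. M))"
  by measurable

lemma measurable_fst_component[measurable]:
  "i \<in> I \<Longrightarrow> (\<lambda>\<omega>. fst (\<omega> i)) \<in> measurable (PiM I (\<lambda>_. M)) (count_space UNIV)"
  by measurable

end

locale orthonormal_gaussian_mixture = gaussian_mixture \<mu>0 \<mu>1 \<sigma> for \<mu>0 \<mu>1 :: "real^'n" and \<sigma> +
  assumes norm_mu0: "norm \<mu>0 = 1" and norm_mu1: "norm \<mu>1 = 1" and inner_mu0_mu1: "\<mu>0 \<bullet> \<mu>1 = 0"
begin

lemma inner_mean: "mean c \<bullet> mean c' = of_bool (c = c')"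
  using norm_mu0 norm_mu1 inner_mu0_mu1
  by (auto simp: mean_def power2_norm_eq_inner[symmetric] inner_commute)

lemma norm_mean: "norm (mean c) = 1"
  using norm_mu0 norm_mu1 by (simp add: mean_def)

lemma sum_Basis_mean: "(\<Sum>b\<in>Basis. (mean c \<bullet> b) * (mean c' \<bullet> b)) = of_bool (c = c')"
  by (simp add: euclidean_inner[symmetric] inner_mean)

lemma integral_mean_bilinear: "(\<integral>p. (mean c \<bullet> snd p) * (b \<bullet> snd p) \<partial>M) = (1/2 + \<sigma>\<^sup>2) * (mean c \<bullet> b)"
proof -
  have "\<mu>0 \<bullet> \<mu>0 = 1" "\<mu>1 \<bullet> \<mu>1 = 1" "\<mu>1 \<bullet> \<mu>0 = 0"
    using inner_mean[of False False] inner_mean[of True True] inner_mean[of True False]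
    by (simp_all add: mean_def)
  then show ?thesis
    using inner_mu0_mu1 by (cases c) (simp_all add: integral_bilinear mean_def inner_commute field_simps)
qed

lemma integral_norm_sq:
  "integrable M (\<lambda>p. (norm (snd p))\<^sup>2)" "(\<integral>p. (norm (snd p))\<^sup>2 \<partial>M) = 1 + real CARD('n) * \<sigma>\<^sup>2"
proof -
  have eq: "(norm x)\<^sup>2 = (\<Sum>b\<in>Basis. (b \<bullet> x) * (b \<bullet> x))" for x :: "real^'n"
    unfolding power2_norm_eq_inner by (subst euclidean_inner) (simp add: inner_commute)
  show "integrable M (\<lambda>p. (norm (snd p))\<^sup>2)"
    unfolding eq by (intro Bochner_Integration.integrable_sum integral_bilinear(1))
  have "(\<integral>p. (norm (snd p))\<^sup>2 \<partial>M)
      = (\<Sum>b\<in>Basis. ((b \<bullet> \<mu>0) * (b \<bullet> \<mu>0) + (b \<bullet> \<mu>1) * (b \<bullet> \<mu>1)) / 2 + \<sigma>\<^sup>2)"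
    unfolding eq by (simp add: Bochner_Integration.integral_sum integral_bilinear)
  also have "\<dots> = (\<mu>0 \<bullet> \<mu>0 + \<mu>1 \<bullet> \<mu>1) / 2 + real CARD('n) * \<sigma>\<^sup>2"
    by (simp add: sum.distrib sum_divide_distrib[symmetric] euclidean_inner[of \<mu>0 \<mu>0]
        euclidean_inner[of \<mu>1 \<mu>1] inner_commute)
  finally show "(\<integral>p. (norm (snd p))\<^sup>2 \<partial>M) = 1 + real CARD('n) * \<sigma>\<^sup>2"
    using norm_mu0 norm_mu1 by (simp add: power2_norm_eq_inner[symmetric])
qed

text \<open>\<open>score y u = y\<^sup>T (\<mu>\<^sub>0\<mu>\<^sub>0\<^sup>T + \<mu>\<^sub>1\<mu>\<^sub>1\<^sup>T) u\<close> is the attention weight in \<open>T_lin\<close>.\<close>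

definition score :: "real^'n \<Rightarrow> real^'n \<Rightarrow> real" where
  "score y u = (\<Sum>c\<in>UNIV. (mean c \<bullet> y) * (mean c \<bullet> u))"

lemma T_lin_eq:
  assumes "0 < L"
  shows "T_lin lam \<mu>0 \<mu>1 L X l = (1 / real L) *\<^sub>R (\<Sum>k<L. (2 * lam * score (X l) (X k)) *\<^sub>R X k)"
  unfolding T_lin_def score_def
  by (simp add: UNIV_bool mean_def inner_commute scaleR_sum_right mult.assoc)

lemma abs_score_le: "\<bar>score y u\<bar> \<le> 2 * (norm y * norm u)"
proof -
  have summand: "\<bar>(mean c \<bullet> y) * (mean c \<bullet> u)\<bar> \<le> norm y * norm u" for c
    using Cauchy_Schwarz_ineq2[of "mean c" y] Cauchy_Schwarz_ineq2[of "mean c" u]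
    by (simp add: abs_mult norm_mean mult_mono)
  have "\<bar>score y u\<bar> \<le> \<bar>(mean False \<bullet> y) * (mean False \<bullet> u)\<bar> + \<bar>(mean True \<bullet> y) * (mean True \<bullet> u)\<bar>"
    unfolding score_def by (simp add: UNIV_bool abs_triangle_ineq)
  then show ?thesis
    using summand[of False] summand[of True] by linarith
qed

section \<open>Moments of the attention score\<close>

lemma score_mult_inner:
  "score y u * (y \<bullet> u) = (\<Sum>c\<in>UNIV. \<Sum>b\<in>Basis. ((mean c \<bullet> y) * (b \<bullet> y)) * ((mean c \<bullet> u) * (b \<bullet> u)))"
  unfolding score_def euclidean_inner[of y u] sum_product by (simp add: inner_commute mult_ac)

lemma score_mult_score_mult_inner:
  "score y u * score y v * (u \<bullet> v) = (\<Sum>c\<in>UNIV. \<Sum>c'\<in>UNIV. \<Sum>b\<in>Basis.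
     ((mean c \<bullet> y) * (mean c' \<bullet> y)) * ((mean c \<bullet> u) * (b \<bullet> u)) * ((mean c' \<bullet> v) * (b \<bullet> v)))"
proof -
  have "score y u * score y v * (u \<bullet> v)
      = (\<Sum>c\<in>UNIV. \<Sum>c'\<in>UNIV. ((mean c \<bullet> y) * (mean c \<bullet> u)) * ((mean c' \<bullet> y) * (mean c' \<bullet> v)) * (u \<bullet> v))"
    by (simp only: score_def sum_product) (simp only: sum_distrib_right)
  then show ?thesis
    unfolding euclidean_inner[of u v] by (simp add: sum_distrib_left inner_commute mult_ac)
qed

lemma integral_score_mult_inner:
  fixes I :: "'i set"
  assumes I: "finite I" "a \<in> I" "b \<in> I" "a \<noteq> b"
  shows "integrable (PiM I (\<lambda>_. M)) (\<lambda>\<omega>. score (snd (\<omega> a)) (snd (\<omega> b)) * (snd (\<omega> a) \<bullet> snd (\<omega> b)))"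
    "(\<integral>\<omega>. score (snd (\<omega> a)) (snd (\<omega> b)) * (snd (\<omega> a) \<bullet> snd (\<omega> b)) \<partial>PiM I (\<lambda>_. M)) = 2 * (1/2 + \<sigma>\<^sup>2)\<^sup>2"
proof -
  define A where "A i p = (mean (fst i) \<bullet> snd p) * (snd i \<bullet> snd p)" for i :: "bool \<times> (real^'n)" and p :: "bool \<times> (real^'n)"
  have eq: "score (snd (\<omega> a)) (snd (\<omega> b)) * (snd (\<omega> a) \<bullet> snd (\<omega> b)) = (\<Sum>i\<in>UNIV \<times> Basis. A i (\<omega> a) * A i (\<omega> b))"
    for \<omega> :: "'i \<Rightarrow> bool \<times> (real^'n)"
    by (simp add: score_mult_inner A_def sum.cartesian_product split_def)
  have A: "integrable M (A i)" "integral\<^sup>L M (A i) = (1/2 + \<sigma>\<^sup>2) * (mean (fst i) \<bullet> snd i)" for i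
    unfolding A_def by (simp_all add: integral_bilinear(1) integral_mean_bilinear)
  note r = sample.integral_PiM_sum_prod2[where A = A and B = A and S = "UNIV \<times> Basis", OF I _ A(1) A(1)]
  show "integrable (PiM I (\<lambda>_. M)) (\<lambda>\<omega>. score (snd (\<omega> a)) (snd (\<omega> b)) * (snd (\<omega> a) \<bullet> snd (\<omega> b)))"
    using r(1) by (simp add: eq)
  have "(\<Sum>i\<in>UNIV \<times> Basis. (1/2 + \<sigma>\<^sup>2) * (mean (fst i) \<bullet> snd i) * ((1/2 + \<sigma>\<^sup>2) * (mean (fst i) \<bullet> snd i)))
      = (1/2 + \<sigma>\<^sup>2)\<^sup>2 * (\<Sum>c\<in>UNIV. \<Sum>b\<in>Basis. (mean c \<bullet> b) * (mean c \<bullet> b))"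
    by (simp add: sum.cartesian_product' sum_distrib_left power2_eq_square mult_ac)
  then show "(\<integral>\<omega>. score (snd (\<omega> a)) (snd (\<omega> b)) * (snd (\<omega> a) \<bullet> snd (\<omega> b)) \<partial>PiM I (\<lambda>_. M)) = 2 * (1/2 + \<sigma>\<^sup>2)\<^sup>2"
    using r(2) by (simp add: eq A(2) sum_Basis_mean UNIV_bool)
qed

lemma integral_label_score_score_inner:
  fixes I :: "'i set"
  assumes I: "finite I" "j \<in> I" "k \<in> I" "m \<in> I" "j \<noteq> k" "j \<noteq> m" "k \<noteq> m"
  shows "integrable (PiM I (\<lambda>_. M)) (\<lambda>\<omega>. of_bool (fst (\<omega> j) = c) *
      (score (snd (\<omega> j)) (snd (\<omega> k)) * score (snd (\<omega> j)) (snd (\<omega> m)) * (snd (\<omega> k) \<bullet> snd (\<omega> m))))"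
    "(\<integral>\<omega>. of_bool (fst (\<omega> j) = c) *
      (score (snd (\<omega> j)) (snd (\<omega> k)) * score (snd (\<omega> j)) (snd (\<omega> m)) * (snd (\<omega> k) \<bullet> snd (\<omega> m)))
      \<partial>PiM I (\<lambda>_. M)) = (1/2 + \<sigma>\<^sup>2) ^ 3"
proof -
  define A where "A i p = of_bool (fst p = c) * ((mean (fst i) \<bullet> snd p) * (mean (fst (snd i)) \<bullet> snd p))"
    for i :: "bool \<times> bool \<times> (real^'n)" and p :: "bool \<times> (real^'n)"
  define B where "B i p = (mean (fst i) \<bullet> snd p) * (snd (snd i) \<bullet> snd p)"
    for i :: "bool \<times> bool \<times> (real^'n)" and p :: "bool \<times> (real^'n)"
  define C where "C i p = (mean (fst (snd i)) \<bullet> snd p) * (snd (snd i) \<bullet> snd p)"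
    for i :: "bool \<times> bool \<times> (real^'n)" and p :: "bool \<times> (real^'n)"
  define K where "K = 1/2 + \<sigma>\<^sup>2"
  define D where "D c1 c2 = ((mean c1 \<bullet> mean c) * (mean c2 \<bullet> mean c) + \<sigma>\<^sup>2 * (mean c1 \<bullet> mean c2)) / 2" for c1 c2
  have eq: "of_bool (fst (\<omega> j) = c) *
      (score (snd (\<omega> j)) (snd (\<omega> k)) * score (snd (\<omega> j)) (snd (\<omega> m)) * (snd (\<omega> k) \<bullet> snd (\<omega> m)))
      = (\<Sum>i\<in>UNIV \<times> UNIV \<times> Basis. A i (\<omega> j) * B i (\<omega> k) * C i (\<omega> m))" for \<omega> :: "'i \<Rightarrow> bool \<times> (real^'n)"
    unfolding score_mult_score_mult_inner
    by (simp add: A_def B_def C_def sum.cartesian_product split_def sum_distrib_left mult_ac)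
  have ABC: "integrable M (A i)" "integrable M (B i)" "integrable M (C i)"
    "integral\<^sup>L M (A i) = D (fst i) (fst (snd i))"
    "integral\<^sup>L M (B i) = K * (mean (fst i) \<bullet> snd (snd i))"
    "integral\<^sup>L M (C i) = K * (mean (fst (snd i)) \<bullet> snd (snd i))" for i
    unfolding A_def B_def C_def D_def K_def
    by (simp_all add: integral_label_bilinear integral_bilinear(1) integral_mean_bilinear)
  note r = sample.integral_PiM_sum_prod3[where A = A and B = B and C = C and S = "UNIV \<times> UNIV \<times> Basis",
      OF I _ ABC(1-3)]
  show "integrable (PiM I (\<lambda>_. M)) (\<lambda>\<omega>. of_bool (fst (\<omega> j) = c) *
      (score (snd (\<omega> j)) (snd (\<omega> k)) * score (snd (\<omega> j)) (snd (\<omega> m)) * (snd (\<omega> k) \<bullet> snd (\<omega> m))))"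
    using r(1) by (simp add: eq)
  have "(\<integral>\<omega>. of_bool (fst (\<omega> j) = c) *
      (score (snd (\<omega> j)) (snd (\<omega> k)) * score (snd (\<omega> j)) (snd (\<omega> m)) * (snd (\<omega> k) \<bullet> snd (\<omega> m)))
      \<partial>PiM I (\<lambda>_. M))
      = (\<Sum>i\<in>UNIV \<times> UNIV \<times> Basis. integral\<^sup>L M (A i) * integral\<^sup>L M (B i) * integral\<^sup>L M (C i))"
    unfolding eq using r(2) by simp
  also have "\<dots> = K\<^sup>2 * (\<Sum>c1\<in>UNIV. \<Sum>c2\<in>UNIV. D c1 c2 * (\<Sum>b\<in>Basis. (mean c1 \<bullet> b) * (mean c2 \<bullet> b)))"
    by (simp add: ABC(4-6) sum.cartesian_product' sum_distrib_left power2_eq_square mult_ac)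
  also have "\<dots> = (1/2 + \<sigma>\<^sup>2) ^ 3"
    unfolding sum_Basis_mean D_def K_def
    by (cases c) (simp_all add: UNIV_bool inner_mean power2_eq_square power3_eq_cube field_simps)
  finally show "(\<integral>\<omega>. of_bool (fst (\<omega> j) = c) *
      (score (snd (\<omega> j)) (snd (\<omega> k)) * score (snd (\<omega> j)) (snd (\<omega> m)) * (snd (\<omega> k) \<bullet> snd (\<omega> m)))
      \<partial>PiM I (\<lambda>_. M)) = (1/2 + \<sigma>\<^sup>2) ^ 3" .
qed

lemma integral_score_score_inner:
  fixes I :: "'i set"
  assumes I: "finite I" "j \<in> I" "k \<in> I" "m \<in> I" "j \<noteq> k" "j \<noteq> m" "k \<noteq> m"
  shows "integrable (PiM I (\<lambda>_. M)) (\<lambda>\<omega>.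
      score (snd (\<omega> j)) (snd (\<omega> k)) * score (snd (\<omega> j)) (snd (\<omega> m)) * (snd (\<omega> k) \<bullet> snd (\<omega> m)))"
    "(\<integral>\<omega>. score (snd (\<omega> j)) (snd (\<omega> k)) * score (snd (\<omega> j)) (snd (\<omega> m)) * (snd (\<omega> k) \<bullet> snd (\<omega> m))
      \<partial>PiM I (\<lambda>_. M)) = 2 * (1/2 + \<sigma>\<^sup>2) ^ 3"
proof -
  have sum_labels: "(\<Sum>c\<in>UNIV. of_bool (fst (\<omega> j) = c) * t) = t" for \<omega> :: "'i \<Rightarrow> bool \<times> (real^'n)" and t :: real
    by (cases "fst (\<omega> j)") (simp_all add: UNIV_bool)
  note labelled = integral_label_score_score_inner[OF I]
  have "integrable (PiM I (\<lambda>_. M)) (\<lambda>\<omega>. \<Sum>c\<in>UNIV. of_bool (fst (\<omega> j) = c) *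
      (score (snd (\<omega> j)) (snd (\<omega> k)) * score (snd (\<omega> j)) (snd (\<omega> m)) * (snd (\<omega> k) \<bullet> snd (\<omega> m))))"
    by (intro Bochner_Integration.integrable_sum labelled(1))
  then show "integrable (PiM I (\<lambda>_. M)) (\<lambda>\<omega>.
      score (snd (\<omega> j)) (snd (\<omega> k)) * score (snd (\<omega> j)) (snd (\<omega> m)) * (snd (\<omega> k) \<bullet> snd (\<omega> m)))"
    by (simp only: sum_labels)
  have "(\<integral>\<omega>. (\<Sum>c\<in>UNIV. of_bool (fst (\<omega> j) = c) *
      (score (snd (\<omega> j)) (snd (\<omega> k)) * score (snd (\<omega> j)) (snd (\<omega> m)) * (snd (\<omega> k) \<bullet> snd (\<omega> m))))
      \<partial>PiM I (\<lambda>_. M)) = 2 * (1/2 + \<sigma>\<^sup>2) ^ 3"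
    by (subst Bochner_Integration.integral_sum) (simp_all add: labelled)
  then show "(\<integral>\<omega>. score (snd (\<omega> j)) (snd (\<omega> k)) * score (snd (\<omega> j)) (snd (\<omega> m)) * (snd (\<omega> k) \<bullet> snd (\<omega> m))
      \<partial>PiM I (\<lambda>_. M)) = 2 * (1/2 + \<sigma>\<^sup>2) ^ 3"
    by (simp only: sum_labels)
qed

lemma integral_label_score_inner:
  fixes I :: "'i set"
  assumes I: "finite I" "j \<in> I" "k \<in> I" "j \<noteq> k"
  shows "integrable (PiM I (\<lambda>_. M)) (\<lambda>\<omega>. of_bool (fst (\<omega> j) = c) * score (snd (\<omega> j)) (snd (\<omega> k)) * (e \<bullet> snd (\<omega> k)))"
    "(\<integral>\<omega>. of_bool (fst (\<omega> j) = c) * score (snd (\<omega> j)) (snd (\<omega> k)) * (e \<bullet> snd (\<omega> k)) \<partial>PiM I (\<lambda>_. M))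
      = (1/2 + \<sigma>\<^sup>2) * (mean c \<bullet> e) / 2"
proof -
  define A where "A c' p = of_bool (fst p = c) * (mean c' \<bullet> snd p)" for c' and p :: "bool \<times> (real^'n)"
  define B where "B c' p = (mean c' \<bullet> snd p) * (e \<bullet> snd p)" for c' and p :: "bool \<times> (real^'n)"
  have eq: "of_bool (fst (\<omega> j) = c) * score (snd (\<omega> j)) (snd (\<omega> k)) * (e \<bullet> snd (\<omega> k))
      = (\<Sum>c'\<in>UNIV. A c' (\<omega> j) * B c' (\<omega> k))" for \<omega> :: "'i \<Rightarrow> bool \<times> (real^'n)"
    unfolding A_def B_def score_def by (simp add: sum_distrib_left sum_distrib_right mult_ac)
  have AB: "integrable M (A c')" "integrable M (B c')"
    "integral\<^sup>L M (A c') = of_bool (c' = c) / 2" "integral\<^sup>L M (B c') = (1/2 + \<sigma>\<^sup>2) * (mean c' \<bullet> e)" for c'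
    unfolding A_def B_def
    by (simp_all add: integral_label_linear integral_bilinear(1) integral_mean_bilinear inner_mean)
  note r = sample.integral_PiM_sum_prod2[where A = A and B = B and S = UNIV, OF I _ AB(1,2)]
  show "integrable (PiM I (\<lambda>_. M)) (\<lambda>\<omega>. of_bool (fst (\<omega> j) = c) * score (snd (\<omega> j)) (snd (\<omega> k)) * (e \<bullet> snd (\<omega> k)))"
    using r(1) by (simp add: eq)
  have "(\<integral>\<omega>. of_bool (fst (\<omega> j) = c) * score (snd (\<omega> j)) (snd (\<omega> k)) * (e \<bullet> snd (\<omega> k)) \<partial>PiM I (\<lambda>_. M))
      = (\<Sum>c'\<in>UNIV. integral\<^sup>L M (A c') * integral\<^sup>L M (B c'))"
    unfolding eq using r(2) by simp
  also have "\<dots> = (1/2 + \<sigma>\<^sup>2) * (mean c \<bullet> e) / 2"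
    by (cases c) (simp_all add: AB(3,4) UNIV_bool)
  finally show "(\<integral>\<omega>. of_bool (fst (\<omega> j) = c) * score (snd (\<omega> j)) (snd (\<omega> k)) * (e \<bullet> snd (\<omega> k)) \<partial>PiM I (\<lambda>_. M))
      = (1/2 + \<sigma>\<^sup>2) * (mean c \<bullet> e) / 2" .
qed

section \<open>Loss and conditional variance\<close>

definition loss_term :: "real \<Rightarrow> real^'n \<Rightarrow> real^'n \<Rightarrow> real^'n \<Rightarrow> real" where
  "loss_term lam y u v = (y - (2 * lam * score y u) *\<^sub>R u) \<bullet> (y - (2 * lam * score y v) *\<^sub>R v)"

lemma norm_diff_T_lin_sq:
  assumes "0 < L"
  shows "(norm (X l - T_lin lam \<mu>0 \<mu>1 L X l))\<^sup>2 = (\<Sum>k<L. \<Sum>m<L. loss_term lam (X l) (X k) (X m)) / (real L)\<^sup>2"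
proof -
  have "(\<Sum>k<L. X l) = real L *\<^sub>R X l"
    by (simp only: sum_constant_scaleR card_lessThan)
  then have "X l - T_lin lam \<mu>0 \<mu>1 L X l = (1 / real L) *\<^sub>R (\<Sum>k<L. X l - (2 * lam * score (X l) (X k)) *\<^sub>R X k)"
    using assms by (simp add: T_lin_eq sum_subtractf scaleR_diff_right)
  then show ?thesis
    by (simp only: norm_sq_scaleR_sum loss_term_def)
qed

lemma norm_T_lin_sq:
  assumes "0 < L"
  shows "(norm (T_lin lam \<mu>0 \<mu>1 L X l))\<^sup>2
    = 4 * lam\<^sup>2 * (\<Sum>k<L. \<Sum>m<L. score (X l) (X k) * score (X l) (X m) * (X k \<bullet> X m)) / (real L)\<^sup>2"
proof -
  have "(norm (T_lin lam \<mu>0 \<mu>1 L X l))\<^sup>2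
      = (\<Sum>k<L. \<Sum>m<L. ((2 * lam * score (X l) (X k)) *\<^sub>R X k) \<bullet> ((2 * lam * score (X l) (X m)) *\<^sub>R X m)) / (real L)\<^sup>2"
    by (simp only: T_lin_eq[OF assms] norm_sq_scaleR_sum)
  then show ?thesis
    by (simp add: sum_distrib_left power2_eq_square mult_ac)
qed

lemma loss_term_eq:
  "loss_term lam y u v = (norm y)\<^sup>2 - 2 * lam * (score y u * (y \<bullet> u)) - 2 * lam * (score y v * (y \<bullet> v))
    + 4 * lam\<^sup>2 * (score y u * score y v * (u \<bullet> v))"
  unfolding loss_term_def power2_norm_eq_inner inner_diff_left inner_diff_right inner_scaleR_left inner_scaleR_right
  by (simp add: inner_commute[of u y] inner_commute[of v y] power2_eq_square algebra_simps)

lemma norm_diff_score_le: "norm (y - (2 * lam * score y u) *\<^sub>R u) \<le> (1 + 4 * \<bar>lam\<bar>) * (norm y * (1 + (norm u)\<^sup>2))"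
proof -
  have "norm ((2 * lam * score y u) *\<^sub>R u) = 2 * \<bar>lam\<bar> * \<bar>score y u\<bar> * norm u"
    by (simp add: abs_mult)
  also have "\<dots> \<le> 2 * \<bar>lam\<bar> * (2 * (norm y * norm u)) * norm u"
    by (intro mult_left_mono mult_right_mono abs_score_le) auto
  finally have "norm (y - (2 * lam * score y u) *\<^sub>R u) \<le> norm y + 4 * \<bar>lam\<bar> * (norm y * (norm u)\<^sup>2)"
    using norm_triangle_ineq4[of y "(2 * lam * score y u) *\<^sub>R u"] by (simp add: power2_eq_square mult_ac)
  also have "\<dots> \<le> (1 + 4 * \<bar>lam\<bar>) * (norm y * (1 + (norm u)\<^sup>2))"
    by (simp add: algebra_simps)
  finally show ?thesis .
qed

lemma abs_loss_term_le:
  "\<bar>loss_term lam y u v\<bar> \<le> (1 + 4 * \<bar>lam\<bar>)\<^sup>2 * (poly_weight y + poly_weight u + poly_weight v)"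
proof -
  have "\<bar>loss_term lam y u v\<bar> \<le> norm (y - (2 * lam * score y u) *\<^sub>R u) * norm (y - (2 * lam * score y v) *\<^sub>R v)"
    unfolding loss_term_def by (rule Cauchy_Schwarz_ineq2)
  also have "\<dots> \<le> ((1 + 4 * \<bar>lam\<bar>) * (norm y * (1 + (norm u)\<^sup>2))) * ((1 + 4 * \<bar>lam\<bar>) * (norm y * (1 + (norm v)\<^sup>2)))"
    by (intro mult_mono norm_diff_score_le) auto
  also have "\<dots> = (1 + 4 * \<bar>lam\<bar>)\<^sup>2 * ((norm y)\<^sup>2 * (1 + (norm u)\<^sup>2) * (1 + (norm v)\<^sup>2))"
    by (simp add: power2_eq_square mult_ac)
  also have "\<dots> \<le> (1 + 4 * \<bar>lam\<bar>)\<^sup>2 * ((1 + (norm y)\<^sup>2) * (1 + (norm u)\<^sup>2) * (1 + (norm v)\<^sup>2))"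
    by (intro mult_left_mono mult_right_mono) auto
  also have "\<dots> \<le> (1 + 4 * \<bar>lam\<bar>)\<^sup>2 * (poly_weight y + poly_weight u + poly_weight v)"
    by (intro mult_left_mono prod_le_poly_weight) auto
  finally show ?thesis .
qed

lemma abs_score_score_inner_le:
  "\<bar>score y u * score y v * (u \<bullet> v)\<bar> \<le> 4 * (poly_weight y + poly_weight u + poly_weight v)"
proof -
  have "\<bar>score y u * score y v * (u \<bullet> v)\<bar> \<le> (2 * (norm y * norm u)) * (2 * (norm y * norm v)) * (norm u * norm v)"
    unfolding abs_mult by (intro mult_mono abs_score_le Cauchy_Schwarz_ineq2) auto
  also have "\<dots> = 4 * ((norm y)\<^sup>2 * (norm u)\<^sup>2 * (norm v)\<^sup>2)"
    by (simp add: power2_eq_square mult_ac)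
  also have "\<dots> \<le> 4 * ((1 + (norm y)\<^sup>2) * (1 + (norm u)\<^sup>2) * (1 + (norm v)\<^sup>2))"
    by (intro mult_left_mono mult_mono) auto
  also have "\<dots> \<le> 4 * (poly_weight y + poly_weight u + poly_weight v)"
    by (intro mult_left_mono prod_le_poly_weight) auto
  finally show ?thesis .
qed

lemma norm_score_scaleR_le:
  "norm (score y u *\<^sub>R u) \<le> poly_weight y + poly_weight u + poly_weight u"
proof -
  have "0 \<le> (norm y - 1)\<^sup>2"
    by simp
  then have y: "2 * norm y \<le> 1 + (norm y)\<^sup>2"
    by (simp add: power2_diff)
  have "(norm u)\<^sup>2 \<le> 1 * (1 + (norm u)\<^sup>2)"
    by simp
  also have "\<dots> \<le> (1 + (norm u)\<^sup>2) * (1 + (norm u)\<^sup>2)"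
    by (intro mult_right_mono) auto
  finally have u: "(norm u)\<^sup>2 \<le> (1 + (norm u)\<^sup>2) * (1 + (norm u)\<^sup>2)" .
  have "norm (score y u *\<^sub>R u) \<le> (2 * (norm y * norm u)) * norm u"
    using abs_score_le[of y u] by (simp add: mult_right_mono)
  also have "\<dots> = (2 * norm y) * (norm u)\<^sup>2"
    by (simp add: power2_eq_square)
  also have "\<dots> \<le> (1 + (norm y)\<^sup>2) * ((1 + (norm u)\<^sup>2) * (1 + (norm u)\<^sup>2))"
    using y u by (intro mult_mono) auto
  also have "\<dots> \<le> poly_weight y + poly_weight u + poly_weight u"
    using prod_le_poly_weight[of y u u] by (simp add: mult.assoc)
  finally show ?thesis .
qed

definition asymptotic_loss :: "real \<Rightarrow> real" where
  "asymptotic_loss lam = 1 + real CARD('n) * \<sigma>\<^sup>2 - 8 * lam * (1/2 + \<sigma>\<^sup>2)\<^sup>2 + 8 * lam\<^sup>2 * (1/2 + \<sigma>\<^sup>2) ^ 3"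

lemma integral_loss_term:
  fixes I :: "'i set"
  assumes I: "finite I" "l \<in> I" "k \<in> I" "m \<in> I"
  shows "integrable (PiM I (\<lambda>_. M)) (\<lambda>\<omega>. loss_term lam (snd (\<omega> l)) (snd (\<omega> k)) (snd (\<omega> m)))"
    "\<bar>\<integral>\<omega>. loss_term lam (snd (\<omega> l)) (snd (\<omega> k)) (snd (\<omega> m)) \<partial>PiM I (\<lambda>_. M)\<bar>
      \<le> 3 * (1 + 4 * \<bar>lam\<bar>)\<^sup>2 * (\<integral>p. poly_weight (snd p) \<partial>M)"
    "l \<noteq> k \<Longrightarrow> l \<noteq> m \<Longrightarrow> k \<noteq> m \<Longrightarrow>
      (\<integral>\<omega>. loss_term lam (snd (\<omega> l)) (snd (\<omega> k)) (snd (\<omega> m)) \<partial>PiM I (\<lambda>_. M)) = asymptotic_loss lam"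
proof -
  have "(\<lambda>\<omega>. loss_term lam (snd (\<omega> l)) (snd (\<omega> k)) (snd (\<omega> m))) \<in> borel_measurable (PiM I (\<lambda>_. M))"
    using I unfolding loss_term_def score_def by measurable
  note dominated = sample.integrable_PiM_dominated3[OF I integrable_poly_weight this, where K = "(1 + 4 * \<bar>lam\<bar>)\<^sup>2"]
  show "integrable (PiM I (\<lambda>_. M)) (\<lambda>\<omega>. loss_term lam (snd (\<omega> l)) (snd (\<omega> k)) (snd (\<omega> m)))"
    using dominated(1) abs_loss_term_le by simp
  show "\<bar>\<integral>\<omega>. loss_term lam (snd (\<omega> l)) (snd (\<omega> k)) (snd (\<omega> m)) \<partial>PiM I (\<lambda>_. M)\<bar>
      \<le> 3 * (1 + 4 * \<bar>lam\<bar>)\<^sup>2 * (\<integral>p. poly_weight (snd p) \<partial>M)"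
    using dominated(2) abs_loss_term_le by simp
  assume distinct: "l \<noteq> k" "l \<noteq> m" "k \<noteq> m"
  note norm_sq = sample.integral_PiM_component[OF I(1,2) integral_norm_sq(1)]
  note cross_k = integral_score_mult_inner[OF I(1-3) distinct(1)]
  note cross_m = integral_score_mult_inner[OF I(1,2,4) distinct(2)]
  note quadratic = integral_score_score_inner[OF I distinct]
  show "(\<integral>\<omega>. loss_term lam (snd (\<omega> l)) (snd (\<omega> k)) (snd (\<omega> m)) \<partial>PiM I (\<lambda>_. M)) = asymptotic_loss lam"
    unfolding loss_term_eq using norm_sq cross_k cross_m quadratic
    by (simp add: Bochner_Integration.integral_add Bochner_Integration.integral_diff integral_norm_sq(2)
        asymptotic_loss_def algebra_simps)
qed

lemma integral_label_score_score_inner_le: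
  fixes I :: "'i set"
  assumes I: "finite I" "j \<in> I" "k \<in> I" "m \<in> I"
  shows "integrable (PiM I (\<lambda>_. M)) (\<lambda>\<omega>. of_bool (fst (\<omega> j) = c) *
      (score (snd (\<omega> j)) (snd (\<omega> k)) * score (snd (\<omega> j)) (snd (\<omega> m)) * (snd (\<omega> k) \<bullet> snd (\<omega> m))))"
    "\<bar>\<integral>\<omega>. of_bool (fst (\<omega> j) = c) *
      (score (snd (\<omega> j)) (snd (\<omega> k)) * score (snd (\<omega> j)) (snd (\<omega> m)) * (snd (\<omega> k) \<bullet> snd (\<omega> m)))
      \<partial>PiM I (\<lambda>_. M)\<bar> \<le> 3 * 4 * (\<integral>p. poly_weight (snd p) \<partial>M)"
proof -
  have "(\<lambda>\<omega>. of_bool (fst (\<omega> j) = c) *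
      (score (snd (\<omega> j)) (snd (\<omega> k)) * score (snd (\<omega> j)) (snd (\<omega> m)) * (snd (\<omega> k) \<bullet> snd (\<omega> m))))
      \<in> borel_measurable (PiM I (\<lambda>_. M))"
    using I unfolding score_def by measurable
  note dominated = sample.integrable_PiM_dominated3[OF I integrable_poly_weight this, where K = 4]
  have "\<bar>of_bool b * t\<bar> \<le> \<bar>t\<bar>" for b and t :: real
    by simp
  then have "norm (of_bool (fst (\<omega> j) = c) *
      (score (snd (\<omega> j)) (snd (\<omega> k)) * score (snd (\<omega> j)) (snd (\<omega> m)) * (snd (\<omega> k) \<bullet> snd (\<omega> m))))
      \<le> 4 * (poly_weight (snd (\<omega> j)) + poly_weight (snd (\<omega> k)) + poly_weight (snd (\<omega> m)))" for \<omega>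
    unfolding real_norm_def using abs_score_score_inner_le order_trans by blast
  then show "integrable (PiM I (\<lambda>_. M)) (\<lambda>\<omega>. of_bool (fst (\<omega> j) = c) *
      (score (snd (\<omega> j)) (snd (\<omega> k)) * score (snd (\<omega> j)) (snd (\<omega> m)) * (snd (\<omega> k) \<bullet> snd (\<omega> m))))"
    "\<bar>\<integral>\<omega>. of_bool (fst (\<omega> j) = c) *
      (score (snd (\<omega> j)) (snd (\<omega> k)) * score (snd (\<omega> j)) (snd (\<omega> m)) * (snd (\<omega> k) \<bullet> snd (\<omega> m)))
      \<partial>PiM I (\<lambda>_. M)\<bar> \<le> 3 * 4 * (\<integral>p. poly_weight (snd p) \<partial>M)"
    using dominated by simp_all
qed

lemma integral_label_score_scaleR:
  fixes I :: "'i set"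
  assumes I: "finite I" "j \<in> I" "k \<in> I"
  shows "integrable (PiM I (\<lambda>_. M)) (\<lambda>\<omega>. (of_bool (fst (\<omega> j) = c) * score (snd (\<omega> j)) (snd (\<omega> k))) *\<^sub>R snd (\<omega> k))"
    "norm (\<integral>\<omega>. (of_bool (fst (\<omega> j) = c) * score (snd (\<omega> j)) (snd (\<omega> k))) *\<^sub>R snd (\<omega> k) \<partial>PiM I (\<lambda>_. M))
      \<le> 3 * (\<integral>p. poly_weight (snd p) \<partial>M)"
    "j \<noteq> k \<Longrightarrow> (\<integral>\<omega>. (of_bool (fst (\<omega> j) = c) * score (snd (\<omega> j)) (snd (\<omega> k))) *\<^sub>R snd (\<omega> k) \<partial>PiM I (\<lambda>_. M))
      = ((1/2 + \<sigma>\<^sup>2) / 2) *\<^sub>R mean c"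
proof -
  have "(\<lambda>\<omega>. (of_bool (fst (\<omega> j) = c) * score (snd (\<omega> j)) (snd (\<omega> k))) *\<^sub>R snd (\<omega> k))
      \<in> borel_measurable (PiM I (\<lambda>_. M))"
    using I unfolding score_def by measurable
  note dominated = sample.integrable_PiM_dominated3[OF I(1-3,3) integrable_poly_weight this, where K = 1]
  have "norm ((of_bool (fst (\<omega> j) = c) * score (snd (\<omega> j)) (snd (\<omega> k))) *\<^sub>R snd (\<omega> k))
      \<le> 1 * (poly_weight (snd (\<omega> j)) + poly_weight (snd (\<omega> k)) + poly_weight (snd (\<omega> k)))" for \<omega>
    using norm_score_scaleR_le[of "snd (\<omega> j)" "snd (\<omega> k)"] by (simp add: poly_weight_nonneg)
  note dominated = dominated[OF this]
  show integrable: "integrable (PiM I (\<lambda>_. M)) (\<lambda>\<omega>. (of_bool (fst (\<omega> j) = c) * score (snd (\<omega> j)) (snd (\<omega> k))) *\<^sub>R snd (\<omega> k))"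
    by (rule dominated(1))
  show "norm (\<integral>\<omega>. (of_bool (fst (\<omega> j) = c) * score (snd (\<omega> j)) (snd (\<omega> k))) *\<^sub>R snd (\<omega> k) \<partial>PiM I (\<lambda>_. M))
      \<le> 3 * (\<integral>p. poly_weight (snd p) \<partial>M)"
    using dominated(2) by simp
  assume "j \<noteq> k"
  show "(\<integral>\<omega>. (of_bool (fst (\<omega> j) = c) * score (snd (\<omega> j)) (snd (\<omega> k))) *\<^sub>R snd (\<omega> k) \<partial>PiM I (\<lambda>_. M))
      = ((1/2 + \<sigma>\<^sup>2) / 2) *\<^sub>R mean c"
  proof (rule euclidean_eqI)
    fix e :: "real^'n"
    have "(\<integral>\<omega>. (of_bool (fst (\<omega> j) = c) * score (snd (\<omega> j)) (snd (\<omega> k))) *\<^sub>R snd (\<omega> k) \<partial>PiM I (\<lambda>_. M)) \<bullet> e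
        = (\<integral>\<omega>. of_bool (fst (\<omega> j) = c) * score (snd (\<omega> j)) (snd (\<omega> k)) * (e \<bullet> snd (\<omega> k)) \<partial>PiM I (\<lambda>_. M))"
      using integral_inner_left[OF integrable, of e] by (simp add: inner_commute)
    also have "\<dots> = (((1/2 + \<sigma>\<^sup>2) / 2) *\<^sub>R mean c) \<bullet> e"
      using integral_label_score_inner(2)[OF I \<open>j \<noteq> k\<close>] by (simp add: inner_commute)
    finally show "(\<integral>\<omega>. (of_bool (fst (\<omega> j) = c) * score (snd (\<omega> j)) (snd (\<omega> k))) *\<^sub>R snd (\<omega> k) \<partial>PiM I (\<lambda>_. M)) \<bullet> e
        = (((1/2 + \<sigma>\<^sup>2) / 2) *\<^sub>R mean c) \<bullet> e" .
  qed
qed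

lemma expected_sq_error_deviation:
  assumes "l < L"
  shows "\<bar>(\<integral>\<omega>. (norm (snd (\<omega> l) - T_lin lam \<mu>0 \<mu>1 L (\<lambda>k. snd (\<omega> k)) l))\<^sup>2 \<partial>PiM {..<L} (\<lambda>_. M))
      - asymptotic_loss lam\<bar>
    \<le> 3 * (3 * (1 + 4 * \<bar>lam\<bar>)\<^sup>2 * (\<integral>p. poly_weight (snd p) \<partial>M) + \<bar>asymptotic_loss lam\<bar>) / real L"
proof -
  define B where "B = 3 * (1 + 4 * \<bar>lam\<bar>)\<^sup>2 * (\<integral>p. poly_weight (snd p) \<partial>M)"
  define C where "C = asymptotic_loss lam"
  define E where "E k m = (\<integral>\<omega>. loss_term lam (snd (\<omega> l)) (snd (\<omega> k)) (snd (\<omega> m)) \<partial>PiM {..<L} (\<lambda>_. M))" for k m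
  have L: "0 < L"
    using assms by simp
  note loss = integral_loss_term[of "{..<L}" l, OF _ \<open>l < L\<close>[folded lessThan_iff]]
  have pointwise: "(norm (snd (\<omega> l) - T_lin lam \<mu>0 \<mu>1 L (\<lambda>k. snd (\<omega> k)) l))\<^sup>2
      = (\<Sum>k<L. \<Sum>m<L. loss_term lam (snd (\<omega> l)) (snd (\<omega> k)) (snd (\<omega> m))) / (real L)\<^sup>2" for \<omega>
    using norm_diff_T_lin_sq[OF L, of "\<lambda>k. snd (\<omega> k)"] by simp
  have "(\<integral>\<omega>. (norm (snd (\<omega> l) - T_lin lam \<mu>0 \<mu>1 L (\<lambda>k. snd (\<omega> k)) l))\<^sup>2 \<partial>PiM {..<L} (\<lambda>_. M))
      = (\<Sum>k<L. \<Sum>m<L. E k m) / (real L)\<^sup>2"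
    unfolding pointwise E_def integral_divide_zero by (subst integral_double_sum) (use loss(1) in auto)
  moreover have "\<bar>(\<Sum>k<L. \<Sum>m<L. E k m) / (real L)\<^sup>2 - C\<bar> \<le> 3 * (B + \<bar>C\<bar>) / real L"
    using loss(2,3) by (intro double_average_deviation[OF assms]) (simp_all add: E_def B_def C_def)
  ultimately show ?thesis
    by (simp add: B_def C_def)
qed

lemma lin_loss_tendsto: "(\<lambda>L. lin_loss lam \<mu>0 \<mu>1 \<sigma> L) \<longlonglongrightarrow> asymptotic_loss lam"
proof (rule tendsto_of_norm_diff_le_inverse)
  define D where "D = 3 * (3 * (1 + 4 * \<bar>lam\<bar>)\<^sup>2 * (\<integral>p. poly_weight (snd p) \<partial>M) + \<bar>asymptotic_loss lam\<bar>)"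
  fix L :: nat
  assume "1 \<le> L"
  define E where "E l = (\<integral>\<omega>. (norm (snd (\<omega> l) - T_lin lam \<mu>0 \<mu>1 L (\<lambda>k. snd (\<omega> k)) l))\<^sup>2 \<partial>PiM {..<L} (\<lambda>_. M))" for l
  have "lin_loss lam \<mu>0 \<mu>1 \<sigma> L - asymptotic_loss lam = (\<Sum>l<L. E l - asymptotic_loss lam) / real L"
    using \<open>1 \<le> L\<close> by (simp add: lin_loss_def seq_M_def E_def sum_subtractf field_simps)
  moreover have "\<bar>\<Sum>l<L. E l - asymptotic_loss lam\<bar> \<le> (\<Sum>l<L. D / real L)"
    using expected_sq_error_deviation
    by (intro order.trans[OF sum_abs] sum_mono) (auto simp: E_def D_def)
  ultimately have "\<bar>lin_loss lam \<mu>0 \<mu>1 \<sigma> L - asymptotic_loss lam\<bar> \<le> (\<Sum>l<L. D / real L) / real L"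
    by (simp add: abs_divide divide_right_mono)
  also have "\<dots> = D / real L"
    using \<open>1 \<le> L\<close> by simp
  finally show "norm (lin_loss lam \<mu>0 \<mu>1 \<sigma> L - asymptotic_loss lam) \<le> D / real L"
    by simp
qed

lemma label_event:
  fixes L :: nat and c :: bool
  assumes "0 < L"
  defines "A \<equiv> {\<omega> \<in> space (PiM {..<L} (\<lambda>_. M)). fst (\<omega> 0) = c}"
  shows "A \<in> sets (PiM {..<L} (\<lambda>_. M))" "measure (PiM {..<L} (\<lambda>_. M)) A = 1/2"
    "\<And>\<omega>. \<omega> \<in> space (PiM {..<L} (\<lambda>_. M)) \<Longrightarrow> indicator A \<omega> = (of_bool (fst (\<omega> 0) = c) :: real)"
proof -
  interpret P: prob_space "PiM {..<L} (\<lambda>_. M)"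
    by (rule prob_space_PiM) (rule prob_space_sample_M)
  show A: "A \<in> sets (PiM {..<L} (\<lambda>_. M))"
    unfolding A_def using assms
    by (intro measurable_sets_Collect[OF measurable_fst_component[of 0 "{..<L}"]]) simp_all
  show indicator: "indicator A \<omega> = (of_bool (fst (\<omega> 0) = c) :: real)" if "\<omega> \<in> space (PiM {..<L} (\<lambda>_. M))" for \<omega>
    using that by (simp add: A_def indicator_def)
  have "measure (PiM {..<L} (\<lambda>_. M)) A = (\<integral>\<omega>. indicator A \<omega> \<partial>PiM {..<L} (\<lambda>_. M))"
    using A by simp
  also have "\<dots> = (\<integral>\<omega>. of_bool (fst (\<omega> 0) = c) \<partial>PiM {..<L} (\<lambda>_. M))"
    by (intro Bochner_Integration.integral_cong refl indicator)
  also have "\<dots> = 1/2"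
    using sample.integral_PiM_component[of "{..<L}" 0, OF _ _ integral_label(1)] assms
    by (simp add: integral_label(2))
  finally show "measure (PiM {..<L} (\<lambda>_. M)) A = 1/2" .
qed

lemma integral_label_T_lin:
  assumes "0 < L"
  shows "integrable (PiM {..<L} (\<lambda>_. M)) (\<lambda>\<omega>. of_bool (fst (\<omega> 0) = c) *\<^sub>R T_lin lam \<mu>0 \<mu>1 L (\<lambda>k. snd (\<omega> k)) 0)"
    "norm ((\<integral>\<omega>. of_bool (fst (\<omega> 0) = c) *\<^sub>R T_lin lam \<mu>0 \<mu>1 L (\<lambda>k. snd (\<omega> k)) 0 \<partial>PiM {..<L} (\<lambda>_. M))
      - (lam * (1/2 + \<sigma>\<^sup>2)) *\<^sub>R mean c)
    \<le> (2 * \<bar>lam\<bar> * (3 * (\<integral>p. poly_weight (snd p) \<partial>M)) + \<bar>lam * (1/2 + \<sigma>\<^sup>2)\<bar>) / real L"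
proof -
  define F where "F k \<omega> = (2 * lam) *\<^sub>R ((of_bool (fst (\<omega> 0) = c) * score (snd (\<omega> 0)) (snd (\<omega> k))) *\<^sub>R snd (\<omega> k))"
    for k and \<omega> :: "nat \<Rightarrow> bool \<times> (real^'n)"
  note summand = integral_label_score_scaleR[of "{..<L}" 0 k c for k]
  have F: "integrable (PiM {..<L} (\<lambda>_. M)) (F k)" if "k < L" for k
    using summand(1)[of k] assms that unfolding F_def by (intro integrable_scaleR_right) simp
  have pointwise: "of_bool (fst (\<omega> 0) = c) *\<^sub>R T_lin lam \<mu>0 \<mu>1 L (\<lambda>k. snd (\<omega> k)) 0 = (1 / real L) *\<^sub>R (\<Sum>k<L. F k \<omega>)"
    for \<omega>
    using T_lin_eq[OF assms, of lam "\<lambda>k. snd (\<omega> k)" 0]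
    by (simp add: F_def scaleR_sum_right mult_ac)
  show "integrable (PiM {..<L} (\<lambda>_. M)) (\<lambda>\<omega>. of_bool (fst (\<omega> 0) = c) *\<^sub>R T_lin lam \<mu>0 \<mu>1 L (\<lambda>k. snd (\<omega> k)) 0)"
    unfolding pointwise by (intro integrable_scaleR_right Bochner_Integration.integrable_sum F) simp
  have "(\<integral>\<omega>. of_bool (fst (\<omega> 0) = c) *\<^sub>R T_lin lam \<mu>0 \<mu>1 L (\<lambda>k. snd (\<omega> k)) 0 \<partial>PiM {..<L} (\<lambda>_. M))
      = (1 / real L) *\<^sub>R (\<Sum>k<L. integral\<^sup>L (PiM {..<L} (\<lambda>_. M)) (F k))"
    unfolding pointwise using F by (simp add: Bochner_Integration.integral_sum)
  moreover have "norm ((1 / real L) *\<^sub>R (\<Sum>k<L. integral\<^sup>L (PiM {..<L} (\<lambda>_. M)) (F k)) - (lam * (1/2 + \<sigma>\<^sup>2)) *\<^sub>R mean c)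
      \<le> (2 * \<bar>lam\<bar> * (3 * (\<integral>p. poly_weight (snd p) \<partial>M)) + norm ((lam * (1/2 + \<sigma>\<^sup>2)) *\<^sub>R mean c)) / real L"
  proof (rule average_deviation_one_exception[OF assms])
    show "norm (integral\<^sup>L (PiM {..<L} (\<lambda>_. M)) (F k)) \<le> 2 * \<bar>lam\<bar> * (3 * (\<integral>p. poly_weight (snd p) \<partial>M))"
      if "k < L" for k
    proof -
      have "norm (\<integral>\<omega>. (of_bool (fst (\<omega> 0) = c) * score (snd (\<omega> 0)) (snd (\<omega> k))) *\<^sub>R snd (\<omega> k) \<partial>PiM {..<L} (\<lambda>_. M))
          \<le> 3 * (\<integral>p. poly_weight (snd p) \<partial>M)"
        using summand(2)[of k] assms that by simp
      from mult_left_mono[OF this, of "\<bar>2 * lam\<bar>"] show ?thesis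
        unfolding F_def integral_scaleR_right by (simp add: abs_mult)
    qed
    show "integral\<^sup>L (PiM {..<L} (\<lambda>_. M)) (F k) = (lam * (1/2 + \<sigma>\<^sup>2)) *\<^sub>R mean c"
      if "k < L" "k \<noteq> 0" for k
      using summand(3)[of k] assms that unfolding F_def integral_scaleR_right by simp
  qed
  ultimately show "norm ((\<integral>\<omega>. of_bool (fst (\<omega> 0) = c) *\<^sub>R T_lin lam \<mu>0 \<mu>1 L (\<lambda>k. snd (\<omega> k)) 0 \<partial>PiM {..<L} (\<lambda>_. M))
      - (lam * (1/2 + \<sigma>\<^sup>2)) *\<^sub>R mean c)
    \<le> (2 * \<bar>lam\<bar> * (3 * (\<integral>p. poly_weight (snd p) \<partial>M)) + \<bar>lam * (1/2 + \<sigma>\<^sup>2)\<bar>) / real L"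
    by (simp add: norm_mean)
qed

lemma integral_label_norm_T_lin_sq:
  assumes "0 < L"
  shows "integrable (PiM {..<L} (\<lambda>_. M)) (\<lambda>\<omega>. of_bool (fst (\<omega> 0) = c) * (norm (T_lin lam \<mu>0 \<mu>1 L (\<lambda>k. snd (\<omega> k)) 0))\<^sup>2)"
    "\<bar>(\<integral>\<omega>. of_bool (fst (\<omega> 0) = c) * (norm (T_lin lam \<mu>0 \<mu>1 L (\<lambda>k. snd (\<omega> k)) 0))\<^sup>2 \<partial>PiM {..<L} (\<lambda>_. M))
      - 4 * lam\<^sup>2 * (1/2 + \<sigma>\<^sup>2) ^ 3\<bar>
    \<le> 4 * lam\<^sup>2 * (3 * (3 * 4 * (\<integral>p. poly_weight (snd p) \<partial>M) + \<bar>(1/2 + \<sigma>\<^sup>2) ^ 3\<bar>) / real L)"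
proof -
  define H where "H k m = (\<lambda>\<omega>::nat \<Rightarrow> bool \<times> (real^'n). of_bool (fst (\<omega> 0) = c) *
      (score (snd (\<omega> 0)) (snd (\<omega> k)) * score (snd (\<omega> 0)) (snd (\<omega> m)) * (snd (\<omega> k) \<bullet> snd (\<omega> m))))"
    for k m
  define E where "E k m = integral\<^sup>L (PiM {..<L} (\<lambda>_. M)) (H k m)" for k m
  have H: "integrable (PiM {..<L} (\<lambda>_. M)) (H k m)"
    "\<bar>E k m\<bar> \<le> 3 * 4 * (\<integral>p. poly_weight (snd p) \<partial>M)" if "k < L" "m < L" for k m
    using integral_label_score_score_inner_le[of "{..<L}" 0 k m c] assms that by (simp_all add: H_def E_def)
  have pointwise: "of_bool (fst (\<omega> 0) = c) * (norm (T_lin lam \<mu>0 \<mu>1 L (\<lambda>k. snd (\<omega> k)) 0))\<^sup>2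
      = 4 * lam\<^sup>2 * ((\<Sum>k<L. \<Sum>m<L. H k m \<omega>) / (real L)\<^sup>2)" for \<omega>
    using norm_T_lin_sq[OF assms, of lam "\<lambda>k. snd (\<omega> k)" 0]
    by (simp add: H_def sum_distrib_left)
  show "integrable (PiM {..<L} (\<lambda>_. M)) (\<lambda>\<omega>. of_bool (fst (\<omega> 0) = c) * (norm (T_lin lam \<mu>0 \<mu>1 L (\<lambda>k. snd (\<omega> k)) 0))\<^sup>2)"
    unfolding pointwise
    by (intro integrable_mult_right integrable_divide_zero Bochner_Integration.integrable_sum H(1)) simp_all
  define S where "S = (\<Sum>k<L. \<Sum>m<L. E k m) / (real L)\<^sup>2"
  have "(\<integral>\<omega>. of_bool (fst (\<omega> 0) = c) * (norm (T_lin lam \<mu>0 \<mu>1 L (\<lambda>k. snd (\<omega> k)) 0))\<^sup>2 \<partial>PiM {..<L} (\<lambda>_. M))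
      = 4 * lam\<^sup>2 * S"
    unfolding pointwise S_def E_def integral_mult_right_zero integral_divide_zero
    by (subst integral_double_sum) (use H(1) in auto)
  moreover have S: "\<bar>S - (1/2 + \<sigma>\<^sup>2) ^ 3\<bar> \<le> 3 * (3 * 4 * (\<integral>p. poly_weight (snd p) \<partial>M) + \<bar>(1/2 + \<sigma>\<^sup>2) ^ 3\<bar>) / real L"
    unfolding S_def using H(2) integral_label_score_score_inner(2)[of "{..<L}" 0] assms
    by (intro double_average_deviation[OF assms]) (auto simp: E_def H_def)
  moreover have "\<bar>4 * lam\<^sup>2 * S - 4 * lam\<^sup>2 * (1/2 + \<sigma>\<^sup>2) ^ 3\<bar> = 4 * lam\<^sup>2 * \<bar>S - (1/2 + \<sigma>\<^sup>2) ^ 3\<bar>"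
    by (simp add: abs_mult flip: right_diff_distrib)
  ultimately show "\<bar>(\<integral>\<omega>. of_bool (fst (\<omega> 0) = c) * (norm (T_lin lam \<mu>0 \<mu>1 L (\<lambda>k. snd (\<omega> k)) 0))\<^sup>2 \<partial>PiM {..<L} (\<lambda>_. M))
      - 4 * lam\<^sup>2 * (1/2 + \<sigma>\<^sup>2) ^ 3\<bar>
    \<le> 4 * lam\<^sup>2 * (3 * (3 * 4 * (\<integral>p. poly_weight (snd p) \<partial>M) + \<bar>(1/2 + \<sigma>\<^sup>2) ^ 3\<bar>) / real L)"
    using mult_left_mono[OF S, of "4 * lam\<^sup>2"] by simp
qed

lemma lin_cond_var_eq:
  assumes "0 < L"
  shows "lin_cond_var lam \<mu>0 \<mu>1 \<sigma> c L
    = 2 * (\<integral>\<omega>. of_bool (fst (\<omega> 0) = c) * (norm (T_lin lam \<mu>0 \<mu>1 L (\<lambda>k. snd (\<omega> k)) 0))\<^sup>2 \<partial>PiM {..<L} (\<lambda>_. M))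
      - (norm (2 *\<^sub>R (\<integral>\<omega>. of_bool (fst (\<omega> 0) = c) *\<^sub>R T_lin lam \<mu>0 \<mu>1 L (\<lambda>k. snd (\<omega> k)) 0 \<partial>PiM {..<L} (\<lambda>_. M))))\<^sup>2"
proof -
  define P where "P = PiM {..<L} (\<lambda>_. M)"
  define A where "A = {\<omega> \<in> space P. fst (\<omega> 0) = c}"
  define T where "T \<omega> = T_lin lam \<mu>0 \<mu>1 L (\<lambda>k. snd (\<omega> k)) 0" for \<omega> :: "nat \<Rightarrow> bool \<times> (real^'n)"
  note event = label_event[OF assms, where c = c, folded P_def, folded A_def]
  have cond_exp: "cond_exp_event P A f = 2 *\<^sub>R (\<integral>\<omega>. of_bool (fst (\<omega> 0) = c) *\<^sub>R f \<omega> \<partial>P)"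
    for f :: "_ \<Rightarrow> 'b::{banach, second_countable_topology}"
    unfolding cond_exp_event_def event(2) by (simp add: event(3) cong: Bochner_Integration.integral_cong)
  have "integrable P (\<lambda>\<omega>. indicator A \<omega> *\<^sub>R T \<omega>) = integrable P (\<lambda>\<omega>. of_bool (fst (\<omega> 0) = c) *\<^sub>R T \<omega>)"
    by (rule Bochner_Integration.integrable_cong[OF refl]) (simp add: event(3))
  moreover have "integrable P (\<lambda>\<omega>. indicator A \<omega> * (norm (T \<omega>))\<^sup>2)
      = integrable P (\<lambda>\<omega>. of_bool (fst (\<omega> 0) = c) * (norm (T \<omega>))\<^sup>2)"
    by (rule Bochner_Integration.integrable_cong[OF refl]) (simp add: event(3))
  ultimately
  have "integrable P (\<lambda>\<omega>. indicator A \<omega> *\<^sub>R T \<omega>)" "integrable P (\<lambda>\<omega>. indicator A \<omega> * (norm (T \<omega>))\<^sup>2)"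
    using integral_label_T_lin(1)[OF assms, where c = c and lam = lam]
      integral_label_norm_T_lin_sq(1)[OF assms, where c = c and lam = lam]
    by (simp_all add: P_def T_def)
  moreover have "finite_measure P"
    unfolding P_def by (intro prob_space.finite_measure prob_space_PiM prob_space_sample_M)
  ultimately have "cond_var_event P A T = cond_exp_event P A (\<lambda>\<omega>. (norm (T \<omega>))\<^sup>2) - (norm (cond_exp_event P A T))\<^sup>2"
    using event(1,2) by (intro cond_var_event_eq) simp_all
  then show ?thesis
    unfolding lin_cond_var_def seq_M_def P_def[symmetric] A_def[symmetric] T_def[symmetric]
    by (simp add: cond_exp)
qed

lemma lin_cond_var_tendsto:
  "(\<lambda>L. lin_cond_var lam \<mu>0 \<mu>1 \<sigma> c L) \<longlonglongrightarrow> 2 * lam\<^sup>2 * \<sigma>\<^sup>2 * (1 + 2 * \<sigma>\<^sup>2)\<^sup>2"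
proof -
  define K where "K = 1/2 + \<sigma>\<^sup>2"
  define W where "W = (\<integral>p. poly_weight (snd p) \<partial>M)"
  define I1 where "I1 L = (\<integral>\<omega>. of_bool (fst (\<omega> 0) = c) *\<^sub>R T_lin lam \<mu>0 \<mu>1 L (\<lambda>k. snd (\<omega> k)) 0 \<partial>PiM {..<L} (\<lambda>_. M))"
    for L
  define I2 where "I2 L = (\<integral>\<omega>. of_bool (fst (\<omega> 0) = c) * (norm (T_lin lam \<mu>0 \<mu>1 L (\<lambda>k. snd (\<omega> k)) 0))\<^sup>2
      \<partial>PiM {..<L} (\<lambda>_. M))" for L
  have "I1 \<longlonglongrightarrow> (lam * K) *\<^sub>R mean c"
  proof (rule tendsto_of_norm_diff_le_inverse)
    fix L :: nat
    assume "1 \<le> L"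
    then show "norm (I1 L - (lam * K) *\<^sub>R mean c) \<le> (2 * \<bar>lam\<bar> * (3 * W) + \<bar>lam * K\<bar>) / real L"
      using integral_label_T_lin(2)[where L = L and c = c and lam = lam] by (simp add: I1_def K_def W_def)
  qed
  moreover have "I2 \<longlonglongrightarrow> 4 * lam\<^sup>2 * K ^ 3"
  proof (rule tendsto_of_norm_diff_le_inverse)
    fix L :: nat
    assume "1 \<le> L"
    then show "norm (I2 L - 4 * lam\<^sup>2 * K ^ 3) \<le> 4 * lam\<^sup>2 * (3 * (3 * 4 * W + \<bar>K ^ 3\<bar>)) / real L"
      using integral_label_norm_T_lin_sq(2)[where L = L and c = c and lam = lam] by (simp add: I2_def K_def W_def)
  qed
  ultimately have "(\<lambda>L. 2 * I2 L - (norm (2 *\<^sub>R I1 L))\<^sup>2)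
      \<longlonglongrightarrow> 2 * (4 * lam\<^sup>2 * K ^ 3) - (norm (2 *\<^sub>R ((lam * K) *\<^sub>R mean c)))\<^sup>2"
    by (intro tendsto_intros)
  moreover have "2 * (4 * lam\<^sup>2 * K ^ 3) - (norm (2 *\<^sub>R ((lam * K) *\<^sub>R mean c)))\<^sup>2
      = 2 * lam\<^sup>2 * \<sigma>\<^sup>2 * (1 + 2 * \<sigma>\<^sup>2)\<^sup>2"
    by (simp add: norm_mean K_def power2_eq_square power3_eq_cube field_simps)
  moreover have "\<forall>\<^sub>F L in sequentially. 2 * I2 L - (norm (2 *\<^sub>R I1 L))\<^sup>2 = lin_cond_var lam \<mu>0 \<mu>1 \<sigma> c L"
    by (intro eventually_sequentiallyI[of 1]) (simp add: lin_cond_var_eq I1_def I2_def)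
  ultimately show ?thesis
    using Lim_transform_eventually by fastforce
qed

lemma asymptotic_loss_optimal: "asymptotic_loss (1 / (1 + 2 * \<sigma>\<^sup>2)) = \<sigma>\<^sup>2 * (real CARD('n) - 2)"
proof -
  define x where "x = 1 + 2 * \<sigma>\<^sup>2"
  have "x \<noteq> 0"
    using zero_le_power2[of \<sigma>] unfolding x_def by linarith
  have "1/2 + \<sigma>\<^sup>2 = x / 2"
    by (simp add: x_def)
  then have "asymptotic_loss (1 / x) = 1 + real CARD('n) * \<sigma>\<^sup>2 - 8 * (1 / x) * (x / 2)\<^sup>2 + 8 * (1 / x)\<^sup>2 * (x / 2) ^ 3"
    by (simp only: asymptotic_loss_def)
  also have "\<dots> = 1 + real CARD('n) * \<sigma>\<^sup>2 - 2 * x + x"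
    using \<open>x \<noteq> 0\<close> by (simp add: power2_eq_square power3_eq_cube field_simps)
  finally show ?thesis
    by (simp add: x_def algebra_simps)
qed

end

theorem proposition4:
  fixes \<mu>0 \<mu>1 :: "real^'n" and \<sigma> :: real
  assumes "CARD('n) \<ge> 2"
    and "\<sigma> > 0"
    and "norm \<mu>0 = 1" and "norm \<mu>1 = 1" and "\<mu>0 \<bullet> \<mu>1 = 0"
  shows "(\<lambda>L. lin_loss ((1 + 4*\<sigma>^2 + 4*\<sigma>^4) / (1 + 6*\<sigma>^2 + 12*\<sigma>^4 + 8*\<sigma>^6))
              \<mu>0 \<mu>1 \<sigma> L) \<longlonglongrightarrow> \<sigma>^2 * (real CARD('n) - 2)
    \<and> (\<forall>lam>0. \<forall>c::bool. (\<lambda>L. lin_cond_var lam \<mu>0 \<mu>1 \<sigma> c L)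
           \<longlonglongrightarrow> 2 * lam^2 * \<sigma>^2 * (1 + 2*\<sigma>^2)^2)"
proof -
  interpret orthonormal_gaussian_mixture \<mu>0 \<mu>1 \<sigma>
    using assms by unfold_locales auto
  have "1 + 4*\<sigma>^2 + 4*\<sigma>^4 = (1 + 2 * \<sigma>\<^sup>2)\<^sup>2" "1 + 6*\<sigma>^2 + 12*\<sigma>^4 + 8*\<sigma>^6 = (1 + 2 * \<sigma>\<^sup>2) ^ 3"
    by (simp_all add: power2_eq_square power3_eq_cube algebra_simps eval_nat_numeral)
  then have "(1 + 4*\<sigma>^2 + 4*\<sigma>^4) / (1 + 6*\<sigma>^2 + 12*\<sigma>^4 + 8*\<sigma>^6) = (1 + 2 * \<sigma>\<^sup>2)\<^sup>2 / (1 + 2 * \<sigma>\<^sup>2) ^ 3"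
    by simp
  also have "\<dots> = 1 / (1 + 2 * \<sigma>\<^sup>2)"
    by (simp add: power2_eq_square power3_eq_cube)
  finally have lam: "(1 + 4*\<sigma>^2 + 4*\<sigma>^4) / (1 + 6*\<sigma>^2 + 12*\<sigma>^4 + 8*\<sigma>^6) = 1 / (1 + 2 * \<sigma>\<^sup>2)" .
  have "(\<lambda>L. lin_loss (1 / (1 + 2 * \<sigma>\<^sup>2)) \<mu>0 \<mu>1 \<sigma> L) \<longlonglongrightarrow> \<sigma>\<^sup>2 * (real CARD('n) - 2)"
    using lin_loss_tendsto[of "1 / (1 + 2 * \<sigma>\<^sup>2)"] by (simp only: asymptotic_loss_optimal)
  then show ?thesis
    unfolding lam using lin_cond_var_tendsto by blast
qed

end
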